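(* Let $N\ge 1$ and let $\lambda,\mu$, $M_j,\bar M_j$, $c_j,\bar c_j$ ($j=1,\dots,N$) be real constants such that $\lambda\neq 0$, $\mu\neq 0$, $\lambda^2\neq\mu^2$, $\bar M_j\neq M_k$ for all $j,k$, and $\lambda,\mu\notin\{\pm M_j,\pm\bar M_j: j=1,\dots,N\}$. Let $\mathsf M=\mathrm{diag}(M_1,\dots,M_N)$, $\bar{\mathsf M}=\mathrm{diag}(\bar M_1,\dots,\bar M_N)$ and, for $\zeta\in\{\lambda,\mu\}$, $$\mathsf H_\zeta=(\mathsf M-\zeta)(\mathsf M+\zeta)^{-1},\quad \bar{\mathsf H}_\zeta=(\bar{\mathsf M}+\zeta)(\bar{\mathsf M}-\zeta)^{-1},\quad \mathsf L_\zeta=\mathsf H_\zeta-\mathsf H_\zeta^{-1},\quad \bar{\mathsf L}_\zeta=\bar{\mathsf H}_\zeta-\bar{\mathsf H}_\zeta^{-1}$$ (here $\mathsf M-\zeta$ means $\mathsf M-\zeta\mathsf 1$, etc.). Let $\mathsf A_0,\bar{\mathsf A}_0$ be the $N\times N$ matrices with entries $(\mathsf A_0)_{jk}=\dfrac{c_k}{\bar M_j-M_k}$ and $(\bar{\mathsf A}_0)_{jk}=\dfrac{\bar c_k}{M_j-\bar M_k}$, and for $(x,y,n_1,n_2)\in\mathbb R^2\times\mathbb Z^2$ set $$\mathsf A(x,y,n_1,n_2)=\mathsf A_0\exp(x\mathsf L_\lambda+y\mathsf L_\mu)\,\mathsf H_\lambda^{n_1+n_2}\mathsf H_\mu^{n_2-n_1},\qquad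 \bar{\mathsf A}(x,y,n_1,n_2)=\bar{\mathsf A}_0\exp(x\bar{\mathsf L}_\lambda+y\bar{\mathsf L}_\mu)\,\bar{\mathsf H}_\lambda^{n_1+n_2}\bar{\mathsf H}_\mu^{n_2-n_1},$$ $$\varphi(x,y,n_1,n_2)=8xy\,\frac{\lambda\mu(\lambda^2+\mu^2)}{(\lambda^2-\mu^2)^2}+(n_1^2-n_2^2)\ln\left|\frac{\lambda+\mu}{\lambda-\mu}\right|.$$ Assume that $\det\big(\mathsf 1+\mathsf A(x,y,n_1,n_2)\bar{\mathsf A}(x,y,n_1,n_2)\big)>0$ for all $(x,y,n_1,n_2)\in\mathbb R^2\times\mathbb Z^2$, and define $$u(x,y,n_1,n_2)=\varphi(x,y,n_1,n_2)+\ln\det\big(\mathsf 1+\mathsf A(x,y,n_1,n_2)\bar{\mathsf A}(x,y,n_1,n_2)\big).$$ Then $u$ satisfies the $(2+2)$-dimensional Toda lattice equation $$\frac{\partial^2 u}{\partial x\,\partial y}=e^{\Delta_1 u}-e^{\Delta_2 u}$$ for all $(x,y,n_1,n_2)\in\mathbb R^2\times\mathbb Z^2$, where $\Delta_1u(n_1,n_2)=u(n_1+1,n_2)-2u(n_1,n_2)+u(n_1-1,n_2)$ and $\Delta_2u(n_1,n_2)=u(n_1,n_2+1)-2u(n_1,n_2)+u(n_1,n_2-1)$ (with $x,y$ fixed).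
   Context: All matrices and constants are real; $\mathsf 1$ is the $N\times N$ identity matrix. The functions $u$ are functions of two continuous variables $x,y$ and two integer variables $n_1,n_2$. *)

theory Defs
  imports "HOL-Analysis.Analysis"
begin

definition diagm :: "('n::finite \<Rightarrow> real) \<Rightarrow> real^'n^'n" where
  "diagm d = (\<chi> i j. if i = j then d i else 0)"

definition Hd :: "real^'n::finite \<Rightarrow> real \<Rightarrow> 'n \<Rightarrow> real" where
  "Hd M z k = (M$k - z) / (M$k + z)"

definition Hbd :: "real^'n::finite \<Rightarrow> real \<Rightarrow> 'n \<Rightarrow> real" where
  "Hbd Mb z k = (Mb$k + z) / (Mb$k - z)"

definition Ld :: "real^'n::finite \<Rightarrow> real \<Rightarrow> 'n \<Rightarrow> real" where
  "Ld M z k = Hd M z k - inverse (Hd M z k)"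

definition Lbd :: "real^'n::finite \<Rightarrow> real \<Rightarrow> 'n \<Rightarrow> real" where
  "Lbd Mb z k = Hbd Mb z k - inverse (Hbd Mb z k)"

definition A0 :: "real^'n::finite \<Rightarrow> real^'n \<Rightarrow> real^'n \<Rightarrow> real^'n^'n" where
  "A0 c M Mb = (\<chi> j k. c$k / (Mb$j - M$k))"

definition Ab0 :: "real^'n::finite \<Rightarrow> real^'n \<Rightarrow> real^'n \<Rightarrow> real^'n^'n" where
  "Ab0 cb M Mb = (\<chi> j k. cb$k / (M$j - Mb$k))"

text \<open>A(x,y,n1,n2); exp of the diagonal matrix x L_lambda + y L_mu and integer powers
  of the diagonal matrices H are written entrywise.\<close>
definition Amat :: "real \<Rightarrow> real \<Rightarrow> real^'n::finite \<Rightarrow> real^'n \<Rightarrow> real^'n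
    \<Rightarrow> real \<Rightarrow> real \<Rightarrow> int \<Rightarrow> int \<Rightarrow> real^'n^'n" where
  "Amat la mu c M Mb x y n1 n2 =
     A0 c M Mb ** diagm (\<lambda>k. exp (x * Ld M la k + y * Ld M mu k))
       ** diagm (\<lambda>k. Hd M la k powi (n1 + n2)) ** diagm (\<lambda>k. Hd M mu k powi (n2 - n1))"

definition Abmat :: "real \<Rightarrow> real \<Rightarrow> real^'n::finite \<Rightarrow> real^'n \<Rightarrow> real^'n
    \<Rightarrow> real \<Rightarrow> real \<Rightarrow> int \<Rightarrow> int \<Rightarrow> real^'n^'n" where
  "Abmat la mu cb M Mb x y n1 n2 =
     Ab0 cb M Mb ** diagm (\<lambda>k. exp (x * Lbd Mb la k + y * Lbd Mb mu k))
       ** diagm (\<lambda>k. Hbd Mb la k powi (n1 + n2)) ** diagm (\<lambda>k. Hbd Mb mu k powi (n2 - n1))"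

definition phi :: "real \<Rightarrow> real \<Rightarrow> real \<Rightarrow> real \<Rightarrow> int \<Rightarrow> int \<Rightarrow> real" where
  "phi la mu x y n1 n2 =
     8 * x * y * (la * mu * (la^2 + mu^2) / (la^2 - mu^2)^2)
     + real_of_int (n1^2 - n2^2) * ln \<bar>(la + mu) / (la - mu)\<bar>"

definition uu :: "real \<Rightarrow> real \<Rightarrow> real^'n::finite \<Rightarrow> real^'n \<Rightarrow> real^'n \<Rightarrow> real^'n
    \<Rightarrow> real \<Rightarrow> real \<Rightarrow> int \<Rightarrow> int \<Rightarrow> real" where
  "uu la mu c cb M Mb x y n1 n2 =
     phi la mu x y n1 n2
     + ln (det (mat 1 + Amat la mu c M Mb x y n1 n2 ** Abmat la mu cb M Mb x y n1 n2))"

end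

theory Submission
  imports Defs
begin

text \<open>Write E and Eb for the diagonal weights of A and bar A, so that 1 + A bar A = CG E Eb with
  Cauchy-like matrices CA E and CB Eb, and let tau = det (CG E Eb). Changing n1 + n2 or n2 - n1
  by one multiplies the weights by entries of H, which changes CG by a rank-one matrix. Hence tau
  at a neighbouring lattice point is tau times a 2 x 2 determinant in the quantities
  g(alpha, beta) = b(alpha)^T CG^-1 a(beta), by the determinant lemma for rank-two updates. The
  flows in x and y change CG by rank-two matrices as well, so that, by Jacobi's formula and the
  derivative of the inverse, d/dy log tau and its x-derivative are again polynomials in the g's.
  Finally CG has displacement rank two with respect to diag(Mb), so that
  (beta - alpha) g(alpha, beta) = 1 - X(alpha, beta) for a kernel X of rank two; the Toda
  equation then reduces to a polynomial identity satisfied by every rank-two kernel with unit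
  diagonal, which is proved with Groebner bases.\<close>

section \<open>Inverses, determinants and low-rank updates\<close>

lemma matrix_inv_right:
  fixes A :: "'a::semiring_1^'n^'m"
  assumes "invertible A"
  shows "A ** matrix_inv A = mat 1"
  using someI_ex[OF assms[unfolded invertible_def]] unfolding matrix_inv_def by blast

lemma matrix_inv_left:
  fixes A :: "'a::semiring_1^'n^'m"
  assumes "invertible A"
  shows "matrix_inv A ** A = mat 1"
  using someI_ex[OF assms[unfolded invertible_def]] unfolding matrix_inv_def by blast

lemma
  fixes A X :: "'a::field^'n::finite^'n"
  assumes "A ** X = mat 1"
  shows invertible_right_inverse: "invertible A"
    and matrix_inv_unique: "matrix_inv A = X"
proof -
  show inv: "invertible A"
    using assms matrix_left_right_inverse unfolding invertible_def by blast
  have "matrix_inv A ** (A ** X) = X"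
    by (simp add: matrix_mul_assoc matrix_inv_left[OF inv])
  then show "matrix_inv A = X"
    using assms by simp
qed

lemma det_replace_row:
  fixes G :: "'a::field^'n::finite^'n"
  assumes "invertible G"
  shows "det (\<chi> i. if i = k then z else G$i) = (\<Sum>l\<in>UNIV. z$l * matrix_inv G$l$k) * det G"
proof -
  define x where "x = z v* matrix_inv G"
  have row_G: "row i G = G$i" for i
    by (simp add: row_def vec_eq_iff)
  have "x v* G = z"
    unfolding x_def vector_matrix_mul_assoc matrix_inv_left[OF assms] by simp
  then have "(\<Sum>i\<in>UNIV. x$i *s row i G) = z"
    by (simp add: vec_eq_iff vector_matrix_mult_def row_G sum_component mult.commute)
  then have "det (\<chi> i. if i = k then z else row i G) = x$k * det G"
    using cramer_lemma_transpose[of k x G] by (simp cong: if_cong)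
  then show ?thesis
    by (simp add: x_def vector_matrix_mult_def row_G cong: if_cong)
qed

definition outer :: "'a::times^'n \<Rightarrow> 'a^'n \<Rightarrow> 'a^'n^'n" where
  "outer u v = (\<chi> i j. u$i * v$j)"

definition bform :: "'a::semiring_1^'n::finite \<Rightarrow> 'a^'n^'n \<Rightarrow> 'a^'n \<Rightarrow> 'a" where
  "bform v X w = (\<Sum>i\<in>UNIV. \<Sum>j\<in>UNIV. v$i * X$i$j * w$j)"

lemma bform_sum_right: "bform v X w = (\<Sum>i\<in>UNIV. v$i * (\<Sum>j\<in>UNIV. X$i$j * w$j))"
  unfolding bform_def by (simp add: sum_distrib_left mult.assoc)

lemma bform_sum_left: "bform v X w = (\<Sum>j\<in>UNIV. (\<Sum>i\<in>UNIV. v$i * X$i$j) * w$j)"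
  unfolding bform_def by (subst sum.swap) (simp add: sum_distrib_right)

lemma
  fixes w :: "'a::comm_semiring_1^'n::finite"
  shows bform_add_left: "bform (v + v') X w = bform v X w + bform v' X w"
  and bform_add_right: "bform v X (w + w') = bform v X w + bform v X w'"
  and bform_scale_left: "bform (a *s v) X w = a * bform v X w"
  and bform_scale_right: "bform v X (a *s w) = a * bform v X w"
  unfolding bform_def by (simp_all add: algebra_simps sum.distrib sum_distrib_left)

lemma
  fixes w :: "'a::comm_ring_1^'n::finite"
  shows bform_diff_left: "bform (v - v') X w = bform v X w - bform v' X w"
  and bform_diff_right: "bform v X (w - w') = bform v X w - bform v X w'"
  and bform_diff_middle: "bform v (X - X') w = bform v X w - bform v X' w"
  and bform_add_middle: "bform v (X + X') w = bform v X w + bform v X' w"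
  and bform_uminus_middle: "bform v (- X) w = - bform v X w"
  unfolding bform_def by (simp_all add: algebra_simps sum_subtractf sum.distrib sum_negf)

lemmas bform_linear = bform_add_left bform_add_right bform_scale_left bform_scale_right
  bform_diff_left bform_diff_right

lemma bform_outer:
  fixes w :: "'a::comm_semiring_1^'n::finite"
  shows "bform v (outer a b) w = (\<Sum>i\<in>UNIV. v$i * a$i) * (\<Sum>j\<in>UNIV. b$j * w$j)"
  unfolding bform_def outer_def by (simp add: sum_product algebra_simps)

lemma matrix_mul_outer:
  fixes A :: "'a::comm_semiring_1^'n::finite^'n"
  shows "A ** outer a b = outer (A *v a) b"
  by (simp add: vec_eq_iff outer_def matrix_matrix_mult_def matrix_vector_mult_def
      sum_distrib_right mult.assoc)

lemma outer_matrix_mul: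
  fixes A :: "'a::comm_semiring_1^'n::finite^'n"
  shows "outer a b ** A = outer a (b v* A)"
  by (simp add: vec_eq_iff outer_def matrix_matrix_mult_def vector_matrix_mult_def
      sum_distrib_left mult.assoc)

lemma outer_mult_vector:
  fixes u :: "'a::comm_semiring_1^'n::finite"
  shows "outer u v *v a = (\<Sum>i\<in>UNIV. v$i * a$i) *s u"
  by (simp add: vec_eq_iff outer_def matrix_vector_mult_def sum_distrib_left mult_ac)

lemma
  fixes A B C :: "'a::ring_1^'n::finite^'n"
  shows matrix_add_rdistrib: "(A + B) ** C = A ** C + B ** C"
    and matrix_diff_ldistrib: "A ** (B - C) = A ** B - A ** C"
    and matrix_diff_rdistrib: "(A - B) ** C = A ** C - B ** C"
    and matrix_mul_uminus_right: "A ** - B = - (A ** B)"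
  by (simp_all add: vec_eq_iff matrix_matrix_mult_def algebra_simps sum.distrib sum_subtractf
      sum_negf)

lemma det_replace_row_add_outer:
  fixes G :: "'a::comm_ring_1^'n::finite^'n"
  assumes "j \<notin> S"
  shows "det (\<chi> l. if l = j then v else if l \<in> S then G$l + u$l *s v else G$l)
       = det (\<chi> l. if l = j then v else G$l)"
proof -
  have "finite S" by simp
  then show ?thesis using assms
  proof (induction S rule: finite_induct)
    case empty
    show ?case by (simp cong: if_cong)
  next
    case (insert i S)
    let ?Y = "(\<chi> l. if l = j then v else if l \<in> S then G$l + u$l *s v else G$l) :: 'a^'n^'n"
    have "i \<noteq> j" using insert by auto
    have "(\<chi> l. if l = j then v else if l \<in> insert i S then G$l + u$l *s v else G$l)
        = (\<chi> l. if l = i then row i ?Y + (u$i) *s row j ?Y else row l ?Y)"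
      using insert.hyps \<open>i \<noteq> j\<close> by (auto simp: vec_eq_iff row_def)
    then show ?case
      using det_row_operation[OF \<open>i \<noteq> j\<close>, of ?Y "u$i"] insert by simp
  qed
qed

lemma det_add_outer_expansion:
  fixes G :: "'a::comm_ring_1^'n::finite^'n"
  shows "det (G + outer u v) = det G + (\<Sum>i\<in>UNIV. u$i * det (\<chi> l. if l = i then v else G$l))"
proof -
  have expansion: "det (\<chi> l. if l \<in> S then G$l + u$l *s v else G$l)
      = det G + (\<Sum>i\<in>S. u$i * det (\<chi> l. if l = i then v else G$l))" for S :: "'n set"
  proof -
    have "finite S" by simp
    then show ?thesis
    proof (induction S rule: finite_induct)
      case empty
      then show ?case by (simp add: vec_eq_iff)
    next
      case (insert j S)
      let ?Z = "(\<chi> l. if l \<in> S then G$l + u$l *s v else G$l) :: 'a^'n^'n"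
      have split: "(\<chi> l. if l \<in> insert j S then G$l + u$l *s v else G$l)
          = (\<chi> l. if l = j then row l ?Z + u$j *s v else row l ?Z)"
        using insert.hyps by (auto simp: vec_eq_iff row_def)
      have rows: "(\<chi> l. if l = j then row l ?Z else row l ?Z) = ?Z"
        by (simp add: vec_eq_iff row_def)
      have replaced: "(\<chi> l. if l = j then v else row l ?Z)
          = (\<chi> l. if l = j then v else if l \<in> S then G$l + u$l *s v else G$l)"
        by (simp add: vec_eq_iff row_def)
      have "det (\<chi> l. if l \<in> insert j S then G$l + u$l *s v else G$l)
          = det ?Z + u$j * det (\<chi> l. if l = j then v else row l ?Z)"
        unfolding split det_row_add[of j "\<lambda>l. row l ?Z" "\<lambda>l. u$j *s v" "\<lambda>l. row l ?Z"]
          det_row_mul[of j "u$j" "\<lambda>l. v" "\<lambda>l. row l ?Z"] rows by simp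
      also have "det (\<chi> l. if l = j then v else row l ?Z) = det (\<chi> l. if l = j then v else G$l)"
        unfolding replaced by (rule det_replace_row_add_outer) (use insert in auto)
      finally show ?case using insert by (simp add: algebra_simps)
    qed
  qed
  have "G + outer u v = (\<chi> l. if l \<in> UNIV then G$l + u$l *s v else G$l)"
    by (simp add: vec_eq_iff outer_def)
  then show ?thesis
    using expansion[of UNIV] by simp
qed

lemma det_add_outer_affine:
  fixes H :: "'a::comm_ring_1^'n::finite^'n"
  obtains \<alpha> \<beta> where "\<And>t. det (H + outer (t *s u) v) = \<alpha> + t * \<beta>"
proof
  fix t
  show "det (H + outer (t *s u) v)
      = det H + t * (\<Sum>i\<in>UNIV. u$i * det (\<chi> l. if l = i then v else H$l))"
    unfolding det_add_outer_expansion by (simp add: sum_distrib_left mult.assoc)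
qed

lemma det_add_outer:
  fixes G :: "'a::field^'n::finite^'n"
  assumes "invertible G"
  shows "det (G + outer u v) = det G * (1 + bform v (matrix_inv G) u)"
  unfolding det_add_outer_expansion det_replace_row[OF assms] bform_def
  by (subst sum.swap) (simp add: sum_distrib_left sum_distrib_right algebra_simps)

lemma matrix_inv_add_outer:
  fixes G :: "'a::field^'n::finite^'n"
  assumes inv: "invertible G" and nz: "1 + bform v (matrix_inv G) u \<noteq> 0"
  defines "s \<equiv> 1 / (1 + bform v (matrix_inv G) u)"
  shows "(G + outer u v) ** (matrix_inv G - outer (s *s (matrix_inv G *v u)) (v v* matrix_inv G))
    = mat 1"
proof -
  let ?Gi = "matrix_inv G" and ?m = "bform v (matrix_inv G) u"
  let ?a = "s *s (?Gi *v u)" and ?b = "v v* ?Gi"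
  have va: "(\<Sum>i\<in>UNIV. v$i * ?a$i) = s * ?m"
    by (simp add: bform_sum_right matrix_vector_mult_def sum_distrib_left algebra_simps)
  have Ga: "G *v ?a = s *s u"
    by (simp add: matrix_vector_mul_assoc matrix_inv_right[OF inv] vector_scalar_commute)
  have "(G + outer u v) ** (?Gi - outer ?a ?b)
      = mat 1 - outer (s *s u) ?b + (outer u ?b - outer ((s * ?m) *s u) ?b)"
    unfolding matrix_add_rdistrib
    unfolding matrix_diff_ldistrib matrix_inv_right[OF inv] matrix_mul_outer
    unfolding outer_matrix_mul outer_mult_vector Ga va ..
  also have "\<dots> = mat 1 + outer ((1 - s * (1 + ?m)) *s u) ?b"
    by (simp add: vec_eq_iff outer_def algebra_simps)
  also have "1 - s * (1 + ?m) = 0"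
    using nz unfolding s_def by simp
  finally show ?thesis
    by (simp add: vec_eq_iff outer_def)
qed

lemma det_add_two_outer_nondegenerate:
  fixes G :: "'a::field^'n::finite^'n"
  assumes inv: "invertible G" and nz: "1 + bform v1 (matrix_inv G) u1 \<noteq> 0"
  shows "det (G + outer u1 v1 + outer u2 v2) = det G *
    ((1 + bform v1 (matrix_inv G) u1) * (1 + bform v2 (matrix_inv G) u2)
      - bform v1 (matrix_inv G) u2 * bform v2 (matrix_inv G) u1)"
proof -
  let ?Gi = "matrix_inv G"
  define s where "s = 1 / (1 + bform v1 ?Gi u1)"
  have "(G + outer u1 v1) ** (?Gi - outer (s *s (?Gi *v u1)) (v1 v* ?Gi)) = mat 1"
    unfolding s_def by (rule matrix_inv_add_outer[OF inv nz])
  note inv1 = invertible_right_inverse[OF this] and inv1_eq = matrix_inv_unique[OF this]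
  have "(\<Sum>i\<in>UNIV. v2$i * (s *s (?Gi *v u1))$i) = s * bform v2 ?Gi u1"
    by (simp add: bform_sum_right matrix_vector_mult_def sum_distrib_left algebra_simps)
  moreover have "(\<Sum>j\<in>UNIV. (v1 v* ?Gi)$j * u2$j) = bform v1 ?Gi u2"
    by (simp add: bform_sum_left vector_matrix_mult_def)
  ultimately have "bform v2 (matrix_inv (G + outer u1 v1)) u2
      = bform v2 ?Gi u2 - s * bform v2 ?Gi u1 * bform v1 ?Gi u2"
    unfolding inv1_eq bform_diff_middle bform_outer by simp
  then have "det (G + outer u1 v1 + outer u2 v2) = det G * (1 + bform v1 ?Gi u1) *
      (1 + (bform v2 ?Gi u2 - s * bform v2 ?Gi u1 * bform v1 ?Gi u2))"
    unfolding det_add_outer[OF inv1] det_add_outer[OF inv] by simp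
  also have "\<dots> = det G * ((1 + bform v1 ?Gi u1) * (1 + bform v2 ?Gi u2)
      - (s * (1 + bform v1 ?Gi u1)) * bform v2 ?Gi u1 * bform v1 ?Gi u2)"
    by (simp add: algebra_simps)
  also have "s * (1 + bform v1 ?Gi u1) = 1"
    using nz unfolding s_def by simp
  finally show ?thesis
    by (simp add: mult.commute)
qed

text \<open>In the degenerate case 1 + bform v1 (matrix_inv G) u1 = 0, both sides are affine in a
  factor t scaling u1 and agree for every t \<noteq> 1, hence also at t = 1.\<close>

lemma det_add_two_outer:
  fixes G :: "'a::field_char_0^'n::finite^'n"
  assumes inv: "invertible G"
  shows "det (G + outer u1 v1 + outer u2 v2) = det G *
    ((1 + bform v1 (matrix_inv G) u1) * (1 + bform v2 (matrix_inv G) u2)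
      - bform v1 (matrix_inv G) u2 * bform v2 (matrix_inv G) u1)"
proof -
  let ?Gi = "matrix_inv G"
  show ?thesis
  proof (cases "1 + bform v1 ?Gi u1 = 0")
    case False
    then show ?thesis by (rule det_add_two_outer_nondegenerate[OF inv])
  next
    case True
    then have m11: "bform v1 ?Gi u1 = -1"
      by (simp add: add_eq_0_iff)
    obtain \<alpha> \<beta> where affine: "\<And>t. det ((G + outer u2 v2) + outer (t *s u1) v1) = \<alpha> + t * \<beta>"
      using det_add_outer_affine[where H = "G + outer u2 v2" and u = u1 and v = v1] by blast
    have interpolated: "\<alpha> + t * \<beta> = det G *
        ((1 - t) * (1 + bform v2 ?Gi u2) - t * bform v1 ?Gi u2 * bform v2 ?Gi u1)"
      if "t \<noteq> 1" for t
    proof -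
      have "1 + bform v1 ?Gi (t *s u1) \<noteq> 0"
        using that by (simp add: bform_scale_right m11)
      from det_add_two_outer_nondegenerate[OF inv this, of u2 v2] show ?thesis
        unfolding affine[symmetric] bform_scale_right m11
        by (simp add: algebra_simps)
    qed
    have \<alpha>: "\<alpha> = det G * (1 + bform v2 ?Gi u2)"
      using interpolated[of 0] by simp
    have "2 * \<beta> = 2 * (- det G * (1 + bform v2 ?Gi u2) - det G * bform v1 ?Gi u2 * bform v2 ?Gi u1)"
      using interpolated[of 2] unfolding \<alpha> by algebra
    then have "\<beta> = - det G * (1 + bform v2 ?Gi u2) - det G * bform v1 ?Gi u2 * bform v2 ?Gi u1"
      by (simp only: mult_cancel_left) simp
    then have "\<alpha> + \<beta> = det G * - (bform v1 ?Gi u2 * bform v2 ?Gi u1)"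
      unfolding \<alpha> by algebra
    then show ?thesis
      using affine[of 1] m11 by (simp add: algebra_simps)
  qed
qed

section \<open>Derivatives of determinants and inverses\<close>

lemma has_real_derivative_det:
  fixes Gf :: "real \<Rightarrow> real^'n::finite^'n"
  assumes der: "\<And>i j. ((\<lambda>s. Gf s$i$j) has_real_derivative D$i$j) (at t)"
  shows "((\<lambda>s. det (Gf s)) has_real_derivative
           (\<Sum>k\<in>UNIV. det (\<chi> i. if i = k then D$i else Gf t$i))) (at t)"
proof -
  let ?P = "{p. p permutes (UNIV::'n set)}"
  have "((\<lambda>s. det (Gf s)) has_real_derivative
       (\<Sum>p\<in>?P. of_int (sign p) * (\<Sum>k\<in>UNIV. D$k$p k * prod (\<lambda>j. Gf t$j$p j) (UNIV - {k})))) (at t)"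
    unfolding det_def
    by (intro DERIV_sum DERIV_cmult has_field_derivative_prod der)
  also have "(\<Sum>p\<in>?P. of_int (sign p) * (\<Sum>k\<in>UNIV. D$k$p k * prod (\<lambda>j. Gf t$j$p j) (UNIV - {k})))
      = (\<Sum>k\<in>UNIV. \<Sum>p\<in>?P. of_int (sign p) * (D$k$p k * prod (\<lambda>j. Gf t$j$p j) (UNIV - {k})))"
    by (simp add: sum_distrib_left sum.swap[of _ ?P])
  also have "\<dots> = (\<Sum>k\<in>UNIV. det (\<chi> i. if i = k then D$i else Gf t$i))"
    unfolding det_def
  proof (intro sum.cong refl)
    fix k p
    let ?Dk = "(\<chi> i. if i = k then D$i else Gf t$i)"
    have "prod (\<lambda>i. ?Dk$i$p i) UNIV = ?Dk$k$p k * prod (\<lambda>i. ?Dk$i$p i) (UNIV - {k})"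
      by (subst prod.remove[of UNIV k]) auto
    also have "prod (\<lambda>i. ?Dk$i$p i) (UNIV - {k}) = prod (\<lambda>j. Gf t$j$p j) (UNIV - {k})"
      by (rule prod.cong) auto
    finally show "of_int (sign p) * (D$k$p k * prod (\<lambda>j. Gf t$j$p j) (UNIV - {k}))
        = of_int (sign p) * prod (\<lambda>i. ?Dk$i$p i) UNIV"
      by simp
  qed
  finally show ?thesis .
qed

lemma differentiable_matrix_inv_entry:
  fixes Gf :: "real \<Rightarrow> real^'n::finite^'n"
  assumes inv: "\<And>s. invertible (Gf s)"
    and der: "\<And>i j. ((\<lambda>s. Gf s$i$j) has_real_derivative D$i$j) (at t)"
  shows "(\<lambda>s. matrix_inv (Gf s)$i$j) differentiable (at t)"
proof -
  let ?N = "\<lambda>s. det (\<chi> l. if l = j then axis i 1 else Gf s$l)"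
  \<comment> \<open>Cramer's rule exhibits the entries of the inverse as quotients of determinants.\<close>
  have "matrix_inv (Gf s)$i$j = ?N s / det (Gf s)" for s
  proof -
    have "(\<Sum>l\<in>UNIV. axis i 1 $ l * matrix_inv (Gf s)$l$j)
        = (\<Sum>l\<in>UNIV. if l = i then matrix_inv (Gf s)$l$j else 0)"
      by (rule sum.cong) (auto simp: axis_def)
    then show ?thesis
      using det_replace_row[OF inv, of j "axis i 1"] inv[of s] by (simp add: invertible_det_nz)
  qed
  moreover have "((\<lambda>s. (\<chi> l. if l = j then axis i 1 else Gf s$l)$a$b) has_real_derivative
      (\<chi> l. if l = j then 0 else D$l)$a$b) (at t)" for a b
    using der by auto
  from DERIV_divide[OF has_real_derivative_det[OF this] has_real_derivative_det[OF der]]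
  have "(\<lambda>s. ?N s / det (Gf s)) differentiable (at t)"
    using inv invertible_det_nz unfolding real_differentiable_def by blast
  ultimately show ?thesis
    by simp
qed

lemma has_real_derivative_matrix_inv:
  fixes Gf :: "real \<Rightarrow> real^'n::finite^'n"
  assumes inv: "\<And>s. invertible (Gf s)"
    and der: "\<And>i j. ((\<lambda>s. Gf s$i$j) has_real_derivative D$i$j) (at t)"
  shows "((\<lambda>s. matrix_inv (Gf s)$i$j) has_real_derivative
    (- (matrix_inv (Gf t) ** D ** matrix_inv (Gf t)))$i$j) (at t)"
proof -
  let ?X = "\<lambda>s. matrix_inv (Gf s)"
  define dX :: "real^'n^'n" where "dX = (\<chi> i j. deriv (\<lambda>s. ?X s$i$j) t)"
  have dX: "((\<lambda>s. ?X s$i$j) has_real_derivative dX$i$j) (at t)" for i j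
    unfolding dX_def
    using DERIV_deriv_iff_real_differentiable differentiable_matrix_inv_entry[OF inv der] by simp
  have "D ** ?X t + Gf t ** dX = 0"
  proof -
    have "(D ** ?X t + Gf t ** dX)$a$b = 0" for a b
    proof (rule DERIV_unique)
      show "((\<lambda>s. (Gf s ** ?X s)$a$b) has_real_derivative (D ** ?X t + Gf t ** dX)$a$b) (at t)"
        unfolding matrix_matrix_mult_def
        by (auto intro!: derivative_eq_intros DERIV_sum der dX simp: sum.distrib mult.commute)
      show "((\<lambda>s. (Gf s ** ?X s)$a$b) has_real_derivative 0) (at t)"
        by (simp add: matrix_inv_right[OF inv])
    qed
    then show ?thesis
      by (simp add: vec_eq_iff)
  qed
  then have "Gf t ** dX = - (D ** ?X t)"
    by (simp add: eq_neg_iff_add_eq_0 add.commute)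
  then have "dX = ?X t ** - (D ** ?X t)"
    using matrix_inv_left[OF inv, of t] by (metis matrix_mul_assoc matrix_mul_lid)
  also have "\<dots> = - (?X t ** D ** ?X t)"
    by (simp add: matrix_mul_uminus_right matrix_mul_assoc)
  finally show ?thesis
    using dX by simp
qed

lemma has_real_derivative_det_invertible:
  fixes Gf :: "real \<Rightarrow> real^'n::finite^'n"
  assumes der: "\<And>i j. ((\<lambda>s. Gf s$i$j) has_real_derivative D$i$j) (at t)"
    and inv: "invertible (Gf t)"
  shows "((\<lambda>s. det (Gf s)) has_real_derivative det (Gf t) * trace (matrix_inv (Gf t) ** D)) (at t)"
proof -
  have "det (\<chi> i. if i = k then D$i else Gf t$i)
      = (\<Sum>l\<in>UNIV. D$k$l * matrix_inv (Gf t)$l$k) * det (Gf t)" for k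
  proof -
    have "(\<chi> i. if i = k then D$i else Gf t$i) = (\<chi> i. if i = k then D$k else Gf t$i)"
      by (simp add: vec_eq_iff)
    then show ?thesis
      using det_replace_row[OF inv, of k "D$k"] by simp
  qed
  then have "(\<Sum>k\<in>UNIV. det (\<chi> i. if i = k then D$i else Gf t$i))
      = det (Gf t) * trace (D ** matrix_inv (Gf t))"
    by (simp add: trace_def matrix_matrix_mult_def sum_distrib_left mult.commute)
  then show ?thesis
    using has_real_derivative_det[OF der] trace_mul_sym[of D] by simp
qed

lemma trace_mul_outer:
  fixes X :: "'a::comm_semiring_1^'n::finite^'n"
  shows "trace (X ** outer u v) = bform v X u"
  unfolding matrix_mul_outer
  by (simp add: trace_def outer_def bform_sum_right matrix_vector_mult_def mult.commute)

lemma bform_sandwich_outer: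
  fixes X :: "'a::comm_semiring_1^'n::finite^'n"
  shows "bform b (X ** outer u v ** X) a = bform b X u * bform v X a"
  unfolding matrix_mul_outer unfolding outer_matrix_mul bform_outer
  by (simp add: bform_sum_right[of b] bform_sum_left[of v] matrix_vector_mult_def
      vector_matrix_mult_def)

lemma has_real_derivative_bform:
  fixes bf af :: "real \<Rightarrow> real^'n::finite" and Xf :: "real \<Rightarrow> real^'n^'n"
  assumes db: "\<And>i. ((\<lambda>t. bf t $ i) has_real_derivative b' $ i) (at t)"
    and da: "\<And>i. ((\<lambda>t. af t $ i) has_real_derivative a' $ i) (at t)"
    and dX: "\<And>i j. ((\<lambda>t. Xf t $i$j) has_real_derivative X' $i$j) (at t)"
  shows "((\<lambda>t. bform (bf t) (Xf t) (af t)) has_real_derivative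
      bform b' (Xf t) (af t) + bform (bf t) X' (af t) + bform (bf t) (Xf t) a') (at t)"
  unfolding bform_def
  by (auto intro!: derivative_eq_intros DERIV_sum db da dX simp: sum.distrib algebra_simps)

section \<open>Cauchy-like matrices and their shifts\<close>

text \<open>CA E is the matrix A0 with its k-th column scaled by E k, and CB Eb is bar A0 with its
  j-th column scaled by Eb j, so that 1 + A bar A = CG E Eb for the diagonal weights E, Eb of A
  and bar A. The vectors avec and bvec span the rank-one change of CG under a shift of the
  weights, see CG_shift.\<close>

locale cauchy_matrices =
  fixes M Mb c cb :: "real^'n::finite"
  assumes nodes_distinct: "\<And>j k. Mb$j \<noteq> M$k"
begin

definition CA :: "('n \<Rightarrow> real) \<Rightarrow> real^'n^'n" where
  "CA E = (\<chi> i k. c$k * E k / (Mb$i - M$k))"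

definition CB :: "('n \<Rightarrow> real) \<Rightarrow> real^'n^'n" where
  "CB Eb = (\<chi> k j. cb$j * Eb j / (M$k - Mb$j))"

definition CG :: "('n \<Rightarrow> real) \<Rightarrow> ('n \<Rightarrow> real) \<Rightarrow> real^'n^'n" where
  "CG E Eb = mat 1 + CA E ** CB Eb"

definition avec :: "('n \<Rightarrow> real) \<Rightarrow> real \<Rightarrow> real^'n" where
  "avec E \<beta> = (\<chi> i. \<Sum>k\<in>UNIV. CA E$i$k / (M$k - \<beta>))"

definition bvec :: "('n \<Rightarrow> real) \<Rightarrow> real \<Rightarrow> real^'n" where
  "bvec Eb \<alpha> = (\<chi> j. cb$j * Eb j / (Mb$j - \<alpha>))"

definition gform :: "('n \<Rightarrow> real) \<Rightarrow> ('n \<Rightarrow> real) \<Rightarrow> real \<Rightarrow> real \<Rightarrow> real" where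
  "gform E Eb \<alpha> \<beta> = bform (bvec Eb \<alpha>) (matrix_inv (CG E Eb)) (avec E \<beta>)"

definition shiftE :: "real \<Rightarrow> ('n \<Rightarrow> real) \<Rightarrow> 'n \<Rightarrow> real" where
  "shiftE z E = (\<lambda>k. E k * ((M$k - z) / (M$k + z)))"

definition shiftEb :: "real \<Rightarrow> ('n \<Rightarrow> real) \<Rightarrow> 'n \<Rightarrow> real" where
  "shiftEb z Eb = (\<lambda>k. Eb k * ((Mb$k + z) / (Mb$k - z)))"

lemma nodes_diff_nonzero: "Mb$j - M$k \<noteq> 0" "M$k - Mb$j \<noteq> 0"
  using nodes_distinct[of j k] by auto

lemma CG_entry: "CG E Eb $i$j = (if i = j then 1 else 0) + (\<Sum>k\<in>UNIV. CA E$i$k * CB Eb$k$j)"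
  unfolding CG_def by (simp add: matrix_matrix_mult_def mat_def)

lemma CG_shift:
  assumes "\<And>k. M$k + z \<noteq> 0" and "\<And>k. Mb$k - z \<noteq> 0"
  shows "CG (shiftE z E) (shiftEb z Eb) = CG E Eb + outer (avec E (-z)) ((2*z) *s bvec Eb z)"
proof -
  have partial_fractions: "C * ((x - z) / (x + z)) / (p - x) * (D * ((y + z) / (y - z)) / (x - y))
      = C / (p - x) * (D / (x - y)) + C / (p - x) / (x + z) * (2 * z * (D / (y - z)))"
    if "p - x \<noteq> 0" "x - y \<noteq> 0" "x + z \<noteq> 0" "y - z \<noteq> 0" for x y p C D :: real
    using that by (simp add: divide_simps) (simp add: algebra_simps)
  have "CG (shiftE z E) (shiftEb z Eb) $i$j = (CG E Eb + outer (avec E (-z)) ((2*z) *s bvec Eb z))$i$j"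
    for i j
  proof -
    have "CG (shiftE z E) (shiftEb z Eb) $i$j = (if i = j then 1 else 0) + (\<Sum>k\<in>UNIV.
        c$k * E k * ((M$k - z) / (M$k + z)) / (Mb$i - M$k) *
        (cb$j * Eb j * ((Mb$j + z) / (Mb$j - z)) / (M$k - Mb$j)))"
      unfolding CG_entry by (simp add: CA_def CB_def shiftE_def shiftEb_def mult.assoc)
    also have "\<dots> = (if i = j then 1 else 0)
        + (\<Sum>k\<in>UNIV. c$k * E k / (Mb$i - M$k) * (cb$j * Eb j / (M$k - Mb$j)))
        + (\<Sum>k\<in>UNIV. c$k * E k / (Mb$i - M$k) / (M$k + z)) * (2 * z * (cb$j * Eb j / (Mb$j - z)))"
      unfolding sum_distrib_right sum.distrib[symmetric] add.assoc
      by (intro arg_cong2[where f = "(+)"] refl sum.cong partial_fractions nodes_diff_nonzero assms)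
    also have "\<dots> = (CG E Eb + outer (avec E (-z)) ((2*z) *s bvec Eb z))$i$j"
      by (simp add: CG_entry CA_def CB_def outer_def avec_def bvec_def)
    finally show ?thesis .
  qed
  then show ?thesis
    by (simp add: vec_eq_iff)
qed

lemma avec_shift:
  assumes "\<And>k. M$k + z1 \<noteq> 0" "\<And>k. M$k + z2 \<noteq> 0" "z1 \<noteq> z2"
  shows "avec (shiftE z1 E) (-z2) = (-2*z1/(z2-z1)) *s avec E (-z1) + ((z1+z2)/(z2-z1)) *s avec E (-z2)"
proof -
  have partial_fractions: "C * ((x - z1) / (x + z1)) / P / (x - - z2)
      = (-2*z1/(z2-z1)) * (C / P / (x - - z1)) + ((z1+z2)/(z2-z1)) * (C / P / (x - - z2))"
    if "x + z1 \<noteq> 0" "x + z2 \<noteq> 0" "P \<noteq> 0" for x C P :: real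
    using that assms(3) by (simp add: divide_simps) (simp add: algebra_simps)
  have "(\<Sum>k\<in>UNIV. c$k * (E k * ((M$k - z1) / (M$k + z1))) / (Mb$i - M$k) / (M$k - - z2))
      = (-2*z1/(z2-z1)) * (\<Sum>k\<in>UNIV. c$k * E k / (Mb$i - M$k) / (M$k - - z1))
        + ((z1+z2)/(z2-z1)) * (\<Sum>k\<in>UNIV. c$k * E k / (Mb$i - M$k) / (M$k - - z2))" for i
    unfolding sum_distrib_left sum.distrib[symmetric]
  proof (rule sum.cong[OF refl])
    fix k
    show "c$k * (E k * ((M$k - z1) / (M$k + z1))) / (Mb$i - M$k) / (M$k - - z2)
        = (-2*z1/(z2-z1)) * (c$k * E k / (Mb$i - M$k) / (M$k - - z1))
          + ((z1+z2)/(z2-z1)) * (c$k * E k / (Mb$i - M$k) / (M$k - - z2))"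
      using partial_fractions[OF assms(1,2)[of k] nodes_diff_nonzero(1)[of i k], of "c$k * E k"]
      by (simp add: mult.assoc)
  qed
  then show ?thesis
    unfolding vec_eq_iff avec_def CA_def shiftE_def vec_lambda_beta vector_add_component
      vector_smult_component by blast
qed

lemma bvec_shift:
  assumes "\<And>k. Mb$k - z1 \<noteq> 0" "\<And>k. Mb$k - z2 \<noteq> 0" "z1 \<noteq> z2"
  shows "bvec (shiftEb z1 Eb) z2 = (2*z1/(z1-z2)) *s bvec Eb z1 + ((z1+z2)/(z2-z1)) *s bvec Eb z2"
proof -
  have partial_fractions: "D * ((y + z1) / (y - z1)) / (y - z2)
      = (2*z1/(z1-z2)) * (D / (y - z1)) + ((z1+z2)/(z2-z1)) * (D / (y - z2))"
    if "y - z1 \<noteq> 0" "y - z2 \<noteq> 0" for y D :: real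
    using that assms(3) by (simp add: divide_simps) (simp add: algebra_simps)
  have "cb$j * (Eb j * ((Mb$j + z1) / (Mb$j - z1))) / (Mb$j - z2)
      = (2*z1/(z1-z2)) * (cb$j * Eb j / (Mb$j - z1)) + ((z1+z2)/(z2-z1)) * (cb$j * Eb j / (Mb$j - z2))"
    for j
    using partial_fractions[of "Mb$j" "cb$j * Eb j"] assms(1,2)[of j] by (simp add: mult.assoc)
  then show ?thesis
    unfolding vec_eq_iff bvec_def shiftEb_def by simp
qed

end

text \<open>The factor by which the shift with parameter z1 followed by the shift with parameter z2
  multiplies det CG, with g standing for gform of the unshifted weights: the right-hand side of
  det_add_two_outer once the shifted avec and bvec are expanded by avec_shift and bvec_shift.\<close>

definition double_shift_ratio :: "(real \<Rightarrow> real \<Rightarrow> real) \<Rightarrow> real \<Rightarrow> real \<Rightarrow> real" where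
  "double_shift_ratio g z1 z2 =
    (1 + 2*z1*g z1 (-z1)) * (1 + 2*z2*((2*z1/(z1-z2))*((-2*z1/(z2-z1))*g z1 (-z1) + ((z1+z2)/(z2-z1))*g z1 (-z2))
       + ((z1+z2)/(z2-z1))*((-2*z1/(z2-z1))*g z2 (-z1) + ((z1+z2)/(z2-z1))*g z2 (-z2))))
    - (2*z1*((-2*z1/(z2-z1))*g z1 (-z1) + ((z1+z2)/(z2-z1))*g z1 (-z2)))
      * (2*z2*((2*z1/(z1-z2))*g z1 (-z1) + ((z1+z2)/(z2-z1))*g z2 (-z1)))"

context cauchy_matrices
begin

lemma det_CG_double_shift:
  assumes inv: "invertible (CG E Eb)"
    and "\<And>k. M$k + z1 \<noteq> 0" "\<And>k. M$k + z2 \<noteq> 0" "\<And>k. Mb$k - z1 \<noteq> 0" "\<And>k. Mb$k - z2 \<noteq> 0"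
    and "z1 \<noteq> z2"
  shows "det (CG (shiftE z2 (shiftE z1 E)) (shiftEb z2 (shiftEb z1 Eb)))
    = det (CG E Eb) * double_shift_ratio (gform E Eb) z1 z2"
proof -
  let ?g = "gform E Eb"
  have rank_two: "det (CG E Eb + outer (avec E (-z1)) ((2*z1) *s bvec Eb z1)
      + outer (a1 *s avec E (-z1) + a2 *s avec E (-z2)) ((2*z2) *s (b1 *s bvec Eb z1 + b2 *s bvec Eb z2)))
    = det (CG E Eb) * ((1 + 2*z1*?g z1 (-z1)) * (1 + 2*z2*(b1*(a1*?g z1 (-z1) + a2*?g z1 (-z2))
        + b2*(a1*?g z2 (-z1) + a2*?g z2 (-z2))))
      - (2*z1*(a1*?g z1 (-z1) + a2*?g z1 (-z2))) * (2*z2*(b1*?g z1 (-z1) + b2*?g z2 (-z1))))"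
    for a1 a2 b1 b2
    unfolding det_add_two_outer[OF inv] bform_linear gform_def by (simp add: algebra_simps)
  show ?thesis
    unfolding CG_shift[OF assms(3,5)] CG_shift[OF assms(2,4)] avec_shift[OF assms(2,3,6)]
      bvec_shift[OF assms(4,5,6)] rank_two double_shift_ratio_def ..
qed

end

section \<open>Displacement structure\<close>

lemma diagm_mult: "diagm d ** X = (\<chi> i j. d i * X$i$j)"
  and mult_diagm: "X ** diagm d = (\<chi> i j. X$i$j * d j)"
  by (simp_all add: vec_eq_iff matrix_matrix_mult_def diagm_def if_distrib[of "\<lambda>x. x * _"]
      if_distrib[of "\<lambda>x. _ * x"] cong: if_cong)

context cauchy_matrices
begin

definition arow :: "('n \<Rightarrow> real) \<Rightarrow> real^'n" where
  "arow E = (\<chi> i. \<Sum>k\<in>UNIV. CA E$i$k)"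

definition rvec :: "('n \<Rightarrow> real) \<Rightarrow> ('n \<Rightarrow> real) \<Rightarrow> real^'n" where
  "rvec E Eb = (\<chi> j. \<Sum>k\<in>UNIV. c$k * E k * CB Eb$k$j)"

definition svec :: "('n \<Rightarrow> real) \<Rightarrow> real^'n" where
  "svec Eb = (\<chi> j. cb$j * Eb j)"

definition rho :: "('n \<Rightarrow> real) \<Rightarrow> real \<Rightarrow> real" where
  "rho E b = (\<Sum>k\<in>UNIV. c$k * E k / (M$k - b))"

definition p1 :: "('n \<Rightarrow> real) \<Rightarrow> ('n \<Rightarrow> real) \<Rightarrow> real \<Rightarrow> real" where
  "p1 E Eb a = bform (bvec Eb a) (matrix_inv (CG E Eb)) 1"

definition p2 :: "('n \<Rightarrow> real) \<Rightarrow> ('n \<Rightarrow> real) \<Rightarrow> real \<Rightarrow> real" where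
  "p2 E Eb a = 1 + bform (bvec Eb a) (matrix_inv (CG E Eb)) (arow E)"

definition q1 :: "('n \<Rightarrow> real) \<Rightarrow> ('n \<Rightarrow> real) \<Rightarrow> real \<Rightarrow> real" where
  "q1 E Eb b = rho E b - bform (rvec E Eb) (matrix_inv (CG E Eb)) (avec E b)"

definition q2 :: "('n \<Rightarrow> real) \<Rightarrow> ('n \<Rightarrow> real) \<Rightarrow> real \<Rightarrow> real" where
  "q2 E Eb b = 1 - bform (svec Eb) (matrix_inv (CG E Eb)) (avec E b)"

lemma CG_displacement:
  "diagm (($) Mb) ** CG E Eb - CG E Eb ** diagm (($) Mb) = outer 1 (rvec E Eb) + outer (arow E) (svec Eb)"
proof -
  have partial_fractions: "(x - y) * (C / (x - m) * (D / (m - y))) = C * (D / (m - y)) + C / (x - m) * D"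
    if "x - m \<noteq> 0" "m - y \<noteq> 0" for x y m C D :: real
    using that by (simp add: divide_simps) (simp add: algebra_simps)
  have "(Mb$k - Mb$l) * CG E Eb$k$l = rvec E Eb $ l + arow E $ k * svec Eb $ l" for k l
  proof -
    have "(Mb$k - Mb$l) * CG E Eb$k$l
        = (\<Sum>m\<in>UNIV. (Mb$k - Mb$l) * (c$m * E m / (Mb$k - M$m) * (cb$l * Eb l / (M$m - Mb$l))))"
      unfolding CG_entry by (simp add: CA_def CB_def sum_distrib_left)
    also have "\<dots> = (\<Sum>m\<in>UNIV. c$m * E m * (cb$l * Eb l / (M$m - Mb$l))
        + c$m * E m / (Mb$k - M$m) * (cb$l * Eb l))"
      by (intro sum.cong refl partial_fractions nodes_diff_nonzero)
    also have "\<dots> = rvec E Eb $ l + arow E $ k * svec Eb $ l"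
      by (simp add: rvec_def arow_def svec_def CB_def CA_def sum.distrib sum_distrib_right)
    finally show ?thesis .
  qed
  then show ?thesis
    by (simp add: vec_eq_iff diagm_mult mult_diagm outer_def algebra_simps)
qed

lemma CG_inv_displacement:
  assumes inv: "invertible (CG E Eb)"
  shows "matrix_inv (CG E Eb) ** diagm (($) Mb) - diagm (($) Mb) ** matrix_inv (CG E Eb)
    = matrix_inv (CG E Eb) ** (outer 1 (rvec E Eb) + outer (arow E) (svec Eb)) ** matrix_inv (CG E Eb)"
proof -
  let ?X = "matrix_inv (CG E Eb)" and ?D = "diagm (($) Mb)" and ?G = "CG E Eb"
  have "?X ** (?D ** ?G - ?G ** ?D) ** ?X = ?X ** ?D ** (?G ** ?X) - (?X ** ?G) ** ?D ** ?X"
    by (simp add: matrix_diff_ldistrib matrix_diff_rdistrib matrix_mul_assoc)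
  also have "\<dots> = ?X ** ?D - ?D ** ?X"
    by (simp add: matrix_inv_left[OF inv] matrix_inv_right[OF inv])
  finally show ?thesis
    unfolding CG_displacement by simp
qed

lemma avec_via_arow:
  assumes "\<And>k. M$k - b \<noteq> 0" "\<And>j. Mb$j - b \<noteq> 0"
  shows "avec E b $ j = (arow E $ j + rho E b) / (Mb$j - b)"
proof -
  have partial_fractions: "C / (x - m) / (m - b) = (C / (x - m) + C / (m - b)) / (x - b)"
    if "x - m \<noteq> 0" "m - b \<noteq> 0" "x - b \<noteq> 0" for x m C :: real
    using that by (simp add: divide_simps) (simp add: algebra_simps)
  have "avec E b $ j = (\<Sum>k\<in>UNIV. c$k * E k / (Mb$j - M$k) / (M$k - b))"
    unfolding avec_def CA_def by simp
  also have "\<dots> = (\<Sum>k\<in>UNIV. (c$k * E k / (Mb$j - M$k) + c$k * E k / (M$k - b)) / (Mb$j - b))"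
    by (intro sum.cong refl partial_fractions nodes_diff_nonzero assms)
  also have "\<dots> = (arow E $ j + rho E b) / (Mb$j - b)"
    by (simp add: arow_def rho_def CA_def sum_divide_distrib[symmetric] sum.distrib)
  finally show ?thesis .
qed

text \<open>The displacement structure of CG makes gform a rank-two kernel: this is where the
  algebraic identities behind the Toda equation come from.\<close>

lemma gform_rank_two:
  assumes inv: "invertible (CG E Eb)"
    and a: "\<And>j. Mb$j - a \<noteq> 0" and b: "\<And>j. Mb$j - b \<noteq> 0" "\<And>k. M$k - b \<noteq> 0"
  shows "(b - a) * gform E Eb a b = 1 - p1 E Eb a * q1 E Eb b - p2 E Eb a * q2 E Eb b"
proof -
  let ?X = "matrix_inv (CG E Eb)" and ?D = "diagm (($) Mb)"
  let ?a = "avec E b" and ?b = "bvec Eb a"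
  define w where "w = arow E + rho E b *s 1"
  have a_w: "?a $ j = w $ j / (Mb$j - b)" for j
    unfolding avec_via_arow[OF b(2,1)] w_def by simp
  have b_s: "?b $ i = svec Eb $ i / (Mb$i - a)" for i
    unfolding bvec_def svec_def by simp
  have partial_fractions: "(b - a) * (p / (x - a) * h * (q / (y - b)))
      = p * h * (q / (y - b)) - p / (x - a) * h * q - p / (x - a) * (x * h - h * y) * (q / (y - b))"
    if "x - a \<noteq> 0" "y - b \<noteq> 0" for x y p q h :: real
    using that by (simp add: divide_simps) (simp add: algebra_simps)
  have "(b - a) * gform E Eb a b
      = (\<Sum>i\<in>UNIV. \<Sum>j\<in>UNIV. (b - a) * (svec Eb $ i / (Mb$i - a) * ?X$i$j * (w $ j / (Mb$j - b))))"
    unfolding gform_def bform_def b_s a_w by (simp add: sum_distrib_left)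
  also have "\<dots> = (\<Sum>i\<in>UNIV. \<Sum>j\<in>UNIV. svec Eb $ i * ?X$i$j * ?a $ j - ?b $ i * ?X$i$j * w$j
      - ?b $ i * (Mb$i * ?X$i$j - ?X$i$j * Mb$j) * ?a $ j)"
    unfolding b_s a_w by (intro sum.cong refl partial_fractions a b)
  also have "\<dots> = bform (svec Eb) ?X ?a - bform ?b ?X w - bform ?b (?D ** ?X - ?X ** ?D) ?a"
    unfolding bform_def by (simp add: sum_subtractf diagm_mult mult_diagm)
  also have "?D ** ?X - ?X ** ?D
      = - (?X ** outer 1 (rvec E Eb) ** ?X + ?X ** outer (arow E) (svec Eb) ** ?X)"
    using CG_inv_displacement[OF inv]
    by (simp add: vec_eq_iff matrix_matrix_mult_def sum.distrib algebra_simps)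
  also have "bform ?b ?X w = bform ?b ?X (arow E) + rho E b * bform ?b ?X 1"
    unfolding w_def bform_linear ..
  finally show ?thesis
    unfolding p1_def p2_def q1_def q2_def bform_uminus_middle bform_add_middle bform_sandwich_outer
    by (simp add: algebra_simps)
qed

end

section \<open>Flows in x and y\<close>

context cauchy_matrices
begin

definition regular :: "real \<Rightarrow> bool" where
  "regular z \<longleftrightarrow> (\<forall>k. M$k - z \<noteq> 0 \<and> M$k + z \<noteq> 0 \<and> Mb$k - z \<noteq> 0 \<and> Mb$k + z \<noteq> 0)"

definition flowE :: "real \<Rightarrow> ('n \<Rightarrow> real) \<Rightarrow> real \<Rightarrow> 'n \<Rightarrow> real" where
  "flowE z E0 t = (\<lambda>k. E0 k * exp (t * Ld M z k))"

definition flowEb :: "real \<Rightarrow> ('n \<Rightarrow> real) \<Rightarrow> real \<Rightarrow> 'n \<Rightarrow> real" where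
  "flowEb z Eb0 t = (\<lambda>k. Eb0 k * exp (t * Lbd Mb z k))"

definition CG_velocity :: "real \<Rightarrow> ('n \<Rightarrow> real) \<Rightarrow> ('n \<Rightarrow> real) \<Rightarrow> real^'n^'n" where
  "CG_velocity z E Eb = outer (avec E z) ((2*z) *s bvec Eb z) + outer (avec E (-z)) ((2*z) *s bvec Eb (-z))"

lemma CG_velocity_entry:
  assumes z: "regular z"
  shows "CG_velocity z E Eb $i$j = (\<Sum>k\<in>UNIV.
    c$k * E k / (Mb$i - M$k) * (cb$j * Eb j / (M$k - Mb$j)) * (Ld M z k + Lbd Mb z j))"
proof -
  have partial_fractions: "C / (p - x) * (D / (x - y))
      * ((x - z) / (x + z) - inverse ((x - z) / (x + z)) + ((y + z) / (y - z) - inverse ((y + z) / (y - z))))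
    = 2 * z * (C / (p - x) / (x - z) * (D / (y - z)) + C / (p - x) / (x - - z) * (D / (y - - z)))"
    if "x - z \<noteq> 0" "x + z \<noteq> 0" "y - z \<noteq> 0" "y + z \<noteq> 0" "x - y \<noteq> 0" "p - x \<noteq> 0"
    for x y p C D :: real
    using that by (simp add: divide_simps) (simp add: algebra_simps)
  have "c$k * E k / (Mb$i - M$k) * (cb$j * Eb j / (M$k - Mb$j)) * (Ld M z k + Lbd Mb z j)
      = 2 * z * (c$k * E k / (Mb$i - M$k) / (M$k - z) * (cb$j * Eb j / (Mb$j - z))
        + c$k * E k / (Mb$i - M$k) / (M$k - - z) * (cb$j * Eb j / (Mb$j - - z)))" for k
    unfolding Ld_def Lbd_def Hd_def Hbd_def
    using z nodes_diff_nonzero unfolding regular_def by (intro partial_fractions) auto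
  then show ?thesis
    unfolding CG_velocity_def outer_def avec_def bvec_def CA_def
    by (simp add: sum_distrib_left sum_distrib_right sum.distrib algebra_simps)
qed

lemma has_real_derivative_CG_flow:
  assumes z: "regular z"
  shows "((\<lambda>t. CG (flowE z E0 t) (flowEb z Eb0 t) $i$j) has_real_derivative
    CG_velocity z (flowE z E0 t) (flowEb z Eb0 t) $i$j) (at t)"
proof -
  define K where "K = (\<lambda>k. c$k * E0 k / (Mb$i - M$k) * (cb$j * Eb0 j / (M$k - Mb$j)))"
  define W where "W = (\<lambda>k. Ld M z k + Lbd Mb z j)"
  have "CG (flowE z E0 s) (flowEb z Eb0 s) $i$j = (if i = j then 1 else 0) + (\<Sum>k\<in>UNIV. K k * exp (s * W k))"
    for s
    unfolding CG_entry K_def W_def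
    by (simp add: CA_def CB_def flowE_def flowEb_def distrib_left exp_add mult_ac)
  moreover have "((\<lambda>s. (if i = j then 1 else 0) + (\<Sum>k\<in>UNIV. K k * exp (s * W k))) has_real_derivative
      (\<Sum>k\<in>UNIV. K k * (exp (t * W k) * W k))) (at t)"
    by (auto intro!: derivative_eq_intros DERIV_sum simp: mult_ac)
  moreover have "(\<Sum>k\<in>UNIV. K k * (exp (t * W k) * W k)) = CG_velocity z (flowE z E0 t) (flowEb z Eb0 t) $i$j"
    unfolding CG_velocity_entry[OF z] K_def W_def flowE_def flowEb_def
    by (simp add: distrib_left exp_add mult_ac add_divide_distrib)
  ultimately show ?thesis
    by simp
qed

lemma has_real_derivative_det_CG_flow:
  assumes z: "regular z" and inv: "invertible (CG (flowE z E0 t) (flowEb z Eb0 t))"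
  defines "g \<equiv> gform (flowE z E0 t) (flowEb z Eb0 t)"
  shows "((\<lambda>s. det (CG (flowE z E0 s) (flowEb z Eb0 s))) has_real_derivative
    det (CG (flowE z E0 t) (flowEb z Eb0 t)) * (2*z * g z z + 2*z * g (-z) (-z))) (at t)"
  using has_real_derivative_det_invertible[OF has_real_derivative_CG_flow[OF z] inv]
  unfolding CG_velocity_def matrix_add_ldistrib trace_add trace_mul_outer g_def gform_def
    bform_scale_left .

lemma has_real_derivative_bvec_flow:
  fixes Eb0 :: "'n \<Rightarrow> real" and t :: real
  assumes z: "regular z" and a: "\<And>j. Mb$j - a \<noteq> 0" "z - a \<noteq> 0" "- z - a \<noteq> 0"
  defines "Eb \<equiv> flowEb z Eb0 t"
  shows "((\<lambda>s. bvec (flowEb z Eb0 s) a $ j) has_real_derivative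
    ((2*z) *s ((1/(z-a)) *s (bvec Eb z - bvec Eb a) + (1/(-z-a)) *s (bvec Eb (-z) - bvec Eb a))) $ j) (at t)"
proof -
  have partial_fractions: "D / (y - a) * ((y + z) / (y - z) - inverse ((y + z) / (y - z)))
      = 2 * z * ((1 / (z - a)) * (D / (y - z) - D / (y - a)) + (1 / (- z - a)) * (D / (y - - z) - D / (y - a)))"
    if "y - z \<noteq> 0" "y + z \<noteq> 0" "y - a \<noteq> 0" for y D :: real
    using that a(2,3) by (simp add: divide_simps) (simp add: algebra_simps)
  have "((\<lambda>s. cb$j * (Eb0 j * exp (s * Lbd Mb z j)) / (Mb$j - a)) has_real_derivative
      cb$j * Eb j / (Mb$j - a) * Lbd Mb z j) (at t)"
    using a(1)[of j] unfolding Eb_def flowEb_def by (auto intro!: derivative_eq_intros)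
  also have "cb$j * Eb j / (Mb$j - a) * Lbd Mb z j
      = 2 * z * ((1 / (z - a)) * (cb$j * Eb j / (Mb$j - z) - cb$j * Eb j / (Mb$j - a))
        + (1 / (- z - a)) * (cb$j * Eb j / (Mb$j - - z) - cb$j * Eb j / (Mb$j - a)))"
    unfolding Lbd_def Hbd_def using z a(1) unfolding regular_def by (intro partial_fractions) auto
  also have "\<dots> = ((2*z) *s ((1/(z-a)) *s (bvec Eb z - bvec Eb a) + (1/(-z-a)) *s (bvec Eb (-z) - bvec Eb a))) $ j"
    unfolding bvec_def vec_lambda_beta vector_add_component vector_smult_component vector_minus_component ..
  finally show ?thesis
    unfolding bvec_def flowEb_def by simp
qed

lemma has_real_derivative_avec_flow:
  fixes E0 :: "'n \<Rightarrow> real" and t :: real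
  assumes z: "regular z" and b: "\<And>k. M$k - b \<noteq> 0" "z - b \<noteq> 0" "- z - b \<noteq> 0"
  defines "E \<equiv> flowE z E0 t"
  shows "((\<lambda>s. avec (flowE z E0 s) b $ i) has_real_derivative
    ((-2*z) *s ((1/(z-b)) *s (avec E z - avec E b) + (1/(-z-b)) *s (avec E (-z) - avec E b))) $ i) (at t)"
proof -
  have partial_fractions: "C / (x - b) * ((x - z) / (x + z) - inverse ((x - z) / (x + z)))
      = - 2 * z * ((1 / (z - b)) * (C / (x - z) - C / (x - b)) + (1 / (- z - b)) * (C / (x - - z) - C / (x - b)))"
    if "x - z \<noteq> 0" "x + z \<noteq> 0" "x - b \<noteq> 0" for x C :: real
    using that b(2,3) by (simp add: divide_simps) (simp add: algebra_simps)
  let ?C = "\<lambda>k. c$k * E k / (Mb$i - M$k)"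
  have "((\<lambda>s. \<Sum>k\<in>UNIV. c$k * (E0 k * exp (s * Ld M z k)) / (Mb$i - M$k) / (M$k - b))
      has_real_derivative (\<Sum>k\<in>UNIV. ?C k / (M$k - b) * Ld M z k)) (at t)"
    using b(1) nodes_diff_nonzero unfolding E_def flowE_def
    by (auto intro!: derivative_eq_intros DERIV_sum simp: mult_ac)
  also have "(\<Sum>k\<in>UNIV. ?C k / (M$k - b) * Ld M z k)
      = (\<Sum>k\<in>UNIV. - 2 * z * ((1 / (z - b)) * (?C k / (M$k - z) - ?C k / (M$k - b))
          + (1 / (- z - b)) * (?C k / (M$k - - z) - ?C k / (M$k - b))))"
    unfolding Ld_def Hd_def using z b(1) unfolding regular_def
    by (intro sum.cong refl partial_fractions) auto
  also have "\<dots> = ((-2*z) *s ((1/(z-b)) *s (avec E z - avec E b) + (1/(-z-b)) *s (avec E (-z) - avec E b))) $ i"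
    unfolding avec_def CA_def
    by (simp add: sum_distrib_left sum_subtractf sum.distrib algebra_simps)
  finally show ?thesis
    unfolding avec_def CA_def flowE_def by simp
qed

definition (in -) flow_derivative :: "(real \<Rightarrow> real \<Rightarrow> real) \<Rightarrow> real \<Rightarrow> real \<Rightarrow> real \<Rightarrow> real" where
  "flow_derivative g z a b =
    2*z*((1/(z-a))*(g z b - g a b) + (1/(-z-a))*(g (-z) b - g a b))
    - 2*z*(g a z * g z b + g a (-z) * g (-z) b)
    - 2*z*((1/(z-b))*(g a z - g a b) + (1/(-z-b))*(g a (-z) - g a b))"

lemma has_real_derivative_gform_flow:
  assumes z: "regular z" and inv: "\<And>s. invertible (CG (flowE z E0 s) (flowEb z Eb0 s))"
    and a: "\<And>j. Mb$j - a \<noteq> 0" "z - a \<noteq> 0" "- z - a \<noteq> 0"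
    and b: "\<And>k. M$k - b \<noteq> 0" "z - b \<noteq> 0" "- z - b \<noteq> 0"
  shows "((\<lambda>s. gform (flowE z E0 s) (flowEb z Eb0 s) a b) has_real_derivative
    flow_derivative (gform (flowE z E0 t) (flowEb z Eb0 t)) z a b) (at t)"
proof -
  let ?E = "flowE z E0 t" and ?Eb = "flowEb z Eb0 t"
  let ?X = "matrix_inv (CG ?E ?Eb)" and ?g = "gform ?E ?Eb"
  have deriv: "((\<lambda>s. gform (flowE z E0 s) (flowEb z Eb0 s) a b) has_real_derivative
      bform ((2*z) *s ((1/(z-a)) *s (bvec ?Eb z - bvec ?Eb a) + (1/(-z-a)) *s (bvec ?Eb (-z) - bvec ?Eb a)))
        ?X (avec ?E b)
      + bform (bvec ?Eb a) (- (?X ** CG_velocity z ?E ?Eb ** ?X)) (avec ?E b)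
      + bform (bvec ?Eb a) ?X
        ((-2*z) *s ((1/(z-b)) *s (avec ?E z - avec ?E b) + (1/(-z-b)) *s (avec ?E (-z) - avec ?E b))))
      (at t)"
    unfolding gform_def
    by (intro has_real_derivative_bform has_real_derivative_bvec_flow has_real_derivative_avec_flow
        has_real_derivative_matrix_inv[OF inv has_real_derivative_CG_flow[OF z]] z a b)
  have "bform (bvec ?Eb a) (- (?X ** CG_velocity z ?E ?Eb ** ?X)) (avec ?E b)
      = - (?g a z * (2*z * ?g z b) + ?g a (-z) * (2*z * ?g (-z) b))"
    unfolding CG_velocity_def matrix_add_ldistrib matrix_add_rdistrib bform_uminus_middle
      bform_add_middle bform_sandwich_outer gform_def bform_scale_left by simp
  with deriv show ?thesis
    unfolding bform_linear gform_def[symmetric] flow_derivative_def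
    by (simp add: algebra_simps)
qed

end

section \<open>The algebraic identity\<close>

lemma double_shift_ratio_rank_two:
  fixes g X :: "real \<Rightarrow> real \<Rightarrow> real"
  assumes nz: "z1 \<noteq> 0" "z2 \<noteq> 0" "z1 + z2 \<noteq> 0" "z1 - z2 \<noteq> 0"
    and g: "\<And>a b. a \<in> {z1, -z1, z2, -z2} \<Longrightarrow> b \<in> {z1, -z1, z2, -z2} \<Longrightarrow> (b - a) * g a b = 1 - X a b"
  shows "double_shift_ratio g z1 z2
    = ((z1+z2)^2 * X z1 (-z1) * X z2 (-z2) - 4*z1*z2 * X z1 (-z2) * X z2 (-z1)) / (z1-z2)^2"
proof -
  have nz': "z2 - z1 \<noteq> 0" "-z1-z2 \<noteq> 0" "-z2-z1 \<noteq> 0" "-z1-z1 \<noteq> 0" "-z2-z2 \<noteq> 0"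
    using nz by auto
  have g_X: "g z1 (-z1) = (1 - X z1 (-z1))/(-z1-z1)" "g z1 (-z2) = (1 - X z1 (-z2))/(-z2-z1)"
     "g z2 (-z1) = (1 - X z2 (-z1))/(-z1-z2)" "g z2 (-z2) = (1 - X z2 (-z2))/(-z2-z2)"
    using g[of z1 "-z1"] g[of z1 "-z2"] g[of z2 "-z1"] g[of z2 "-z2"] nz by (auto simp: field_simps)
  show ?thesis
    using nz nz' unfolding double_shift_ratio_def g_X
    by (simp add: divide_simps power2_eq_square) (simp add: algebra_simps)
qed

lemma flow_derivative_rank_two:
  fixes g X :: "real \<Rightarrow> real \<Rightarrow> real"
  assumes nz: "z - a \<noteq> 0" "- z - a \<noteq> 0"
    and g: "\<And>b b'. b \<in> {a, z, -z} \<Longrightarrow> b' \<in> {a, z, -z} \<Longrightarrow> (b' - b) * g b b' = 1 - X b b'"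
  shows "flow_derivative g z a a
    = 2*z*((X z a * X a z - 1)/(z-a)^2 + (X (-z) a * X a (-z) - 1)/(-z-a)^2)"
proof -
  have nz': "a - z \<noteq> 0" "a - - z \<noteq> 0"
    using nz by auto
  have g_X: "g z a = (1 - X z a)/(a - z)" "g a z = (1 - X a z)/(z - a)"
     "g (-z) a = (1 - X (-z) a)/(a - - z)" "g a (-z) = (1 - X a (-z))/(- z - a)"
    using g[of z a] g[of a z] g[of "-z" a] g[of a "-z"] nz by (auto simp: field_simps)
  show ?thesis
    using nz nz' unfolding flow_derivative_def g_X
    by (simp add: divide_simps power2_eq_square) (simp add: algebra_simps)
qed

lemma toda_polynomial_identity:
  fixes p1 p2 q1 q2 :: "real \<Rightarrow> real" and la mu :: real
  defines "X \<equiv> \<lambda>a b. p1 a * q1 b + p2 a * q2 b"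
  assumes diag: "\<And>a. a \<in> {la, -la, mu, -mu} \<Longrightarrow> X a a = 1"
  shows "-8*la*mu*(la^2+mu^2) + 4*la*mu*((la+mu)^2*(X la mu * X mu la + X (-la) (-mu) * X (-mu) (-la))
        + (la-mu)^2*(X (-la) mu * X mu (-la) + X la (-mu) * X (-mu) la))
     = ((la-mu)^2*X la (-la)*X (-mu) mu + 4*la*mu*X la mu*X (-mu) (-la))
         * ((mu-la)^2*X (-la) la*X mu (-mu) + 4*la*mu*X (-la) (-mu)*X mu la)
       - ((la+mu)^2*X la (-la)*X mu (-mu) - 4*la*mu*X la (-mu)*X mu (-la))
         * ((la+mu)^2*X (-la) la*X (-mu) mu - 4*la*mu*X (-la) mu*X (-mu) la)"
proof -
  have "p1 a * q1 a + p2 a * q2 a = 1" if "a \<in> {la, -la, mu, -mu}" for a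
    using diag[OF that] unfolding X_def by simp
  then have d: "p1 la * q1 la + p2 la * q2 la = 1" "p1 (-la) * q1 (-la) + p2 (-la) * q2 (-la) = 1"
    "p1 mu * q1 mu + p2 mu * q2 mu = 1" "p1 (-mu) * q1 (-mu) + p2 (-mu) * q2 (-mu) = 1"
    by auto
  have I: "X la mu * X mu la + X (-la) (-mu) * X (-mu) (-la) + X la (-mu) * X (-mu) la
      + X (-la) mu * X mu (-la) - 2
    = X la (-la) * X (-mu) mu * X (-la) (-mu) * X mu la + X la mu * X (-mu) (-la) * X (-la) la * X mu (-mu)
      + X la (-la) * X mu (-mu) * X (-la) mu * X (-mu) la + X la (-mu) * X mu (-la) * X (-la) la * X (-mu) mu
      - 2 * X la (-la) * X (-la) la * X mu (-mu) * X (-mu) mu"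
    using d unfolding X_def by algebra
  have II: "X la mu * X mu la + X (-la) (-mu) * X (-mu) (-la) - (X la (-mu) * X (-mu) la + X (-la) mu * X mu (-la))
    = X la (-la) * X mu (-mu) * X (-la) mu * X (-mu) la + X la (-mu) * X mu (-la) * X (-la) la * X (-mu) mu
      - (X la (-la) * X (-mu) mu * X (-la) (-mu) * X mu la + X la mu * X (-mu) (-la) * X (-la) la * X mu (-mu))
      + 2 * (X la mu * X (-mu) (-la) * X (-la) (-mu) * X mu la - X la (-mu) * X mu (-la) * X (-la) mu * X (-mu) la)"
    using d unfolding X_def by algebra
  show ?thesis
    using I II by algebra
qed

lemma toda_lhs_common_denominator:
  fixes la mu P1 P2 P3 P4 :: real
  assumes "la - mu \<noteq> 0" "la + mu \<noteq> 0"
  shows "8 * (la * mu * (la^2 + mu^2) / (la^2 - mu^2)^2)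
      + 2 * mu * (2 * la * ((P1 - 1)/(la-mu)^2 + (P2 - 1)/(-la-mu)^2))
      + 2 * mu * (2 * la * ((P3 - 1)/(la- -mu)^2 + (P4 - 1)/(-la- -mu)^2))
    = (-8*la*mu*(la^2+mu^2) + 4*la*mu*((la+mu)^2*(P1 + P4) + (la-mu)^2*(P2 + P3))) / (la^2 - mu^2)^2"
proof -
  have "(la^2 - mu^2)^2 = (la-mu)^2 * (la+mu)^2"
    "(-la-mu)^2 = (la+mu)^2" "(la - -mu)^2 = (la+mu)^2" "(-la- -mu)^2 = (la-mu)^2"
    by (simp_all add: power2_eq_square algebra_simps)
  then show ?thesis
    using assms by (simp add: divide_simps) (simp add: algebra_simps power2_eq_square)
qed

lemma toda_rhs_common_denominator:
  fixes la mu N1 N2 N3 N4 :: real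
  assumes "la - mu \<noteq> 0" "la + mu \<noteq> 0"
  shows "((la+mu)/(la-mu))^2 * (N1/(la+mu)^2) * (N2/(la+mu)^2)
      - (1/((la+mu)/(la-mu))^2) * (N3/(la-mu)^2) * (N4/(la-mu)^2)
    = (N1*N2 - N3*N4) / (la^2 - mu^2)^2"
proof -
  have "(la^2 - mu^2)^2 = (la-mu)^2 * (la+mu)^2"
    by (simp add: power2_eq_square algebra_simps)
  then show ?thesis
    using assms by (simp add: divide_simps)
qed

lemma double_shift_ratios_rank_two:
  fixes g X :: "real \<Rightarrow> real \<Rightarrow> real"
  assumes la: "la \<noteq> 0" and mu: "mu \<noteq> 0" and lm: "la - mu \<noteq> 0" "la + mu \<noteq> 0"
    and X: "\<And>a b. a \<in> {la, -la, mu, -mu} \<Longrightarrow> b \<in> {la, -la, mu, -mu} \<Longrightarrow>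
      (b - a) * g a b = 1 - X a b"
  shows "double_shift_ratio g la (-mu)
      = ((la-mu)^2*X la (-la)*X (-mu) mu + 4*la*mu*X la mu*X (-mu) (-la)) / (la+mu)^2"
    "double_shift_ratio g (-la) mu
      = ((mu-la)^2*X (-la) la*X mu (-mu) + 4*la*mu*X (-la) (-mu)*X mu la) / (la+mu)^2"
    "double_shift_ratio g la mu
      = ((la+mu)^2*X la (-la)*X mu (-mu) - 4*la*mu*X la (-mu)*X mu (-la)) / (la-mu)^2"
    "double_shift_ratio g (-la) (-mu)
      = ((la+mu)^2*X (-la) la*X (-mu) mu - 4*la*mu*X (-la) mu*X (-mu) la) / (la-mu)^2"
proof -
  let ?T = "double_shift_ratio g"
  have T: "?T la (-mu)
      = ((la + -mu)^2 * X la (-la) * X (-mu) (- (-mu)) - 4*la*(-mu) * X la (- (-mu)) * X (-mu) (-la)) / (la - -mu)^2"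
    "?T (-la) mu
      = ((-la + mu)^2 * X (-la) (- (-la)) * X mu (-mu) - 4*(-la)*mu * X (-la) (-mu) * X mu (- (-la))) / (-la - mu)^2"
    "?T la mu
      = ((la + mu)^2 * X la (-la) * X mu (-mu) - 4*la*mu * X la (-mu) * X mu (-la)) / (la - mu)^2"
    "?T (-la) (-mu)
      = ((-la + -mu)^2 * X (-la) (- (-la)) * X (-mu) (- (-mu)) - 4*(-la)*(-mu) * X (-la) (- (-mu)) * X (-mu) (- (-la)))
        / (-la - -mu)^2"
    by (intro double_shift_ratio_rank_two; use la mu lm X in auto)+
  have "(-la + mu)^2 = (mu - la)^2" "(-la - mu)^2 = (la + mu)^2" "(-la + -mu)^2 = (la + mu)^2"
    "(-la - -mu)^2 = (la - mu)^2"
    by (simp_all add: power2_eq_square algebra_simps)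
  then show "?T la (-mu) = ((la-mu)^2*X la (-la)*X (-mu) mu + 4*la*mu*X la mu*X (-mu) (-la)) / (la+mu)^2"
    "?T (-la) mu = ((mu-la)^2*X (-la) la*X mu (-mu) + 4*la*mu*X (-la) (-mu)*X mu la) / (la+mu)^2"
    "?T la mu = ((la+mu)^2*X la (-la)*X mu (-mu) - 4*la*mu*X la (-mu)*X mu (-la)) / (la-mu)^2"
    "?T (-la) (-mu) = ((la+mu)^2*X (-la) la*X (-mu) mu - 4*la*mu*X (-la) mu*X (-mu) la) / (la-mu)^2"
    unfolding T by (simp_all add: algebra_simps)
qed

lemma toda_identity:
  fixes g :: "real \<Rightarrow> real \<Rightarrow> real" and p1 p2 q1 q2 :: "real \<Rightarrow> real"
  assumes la: "la \<noteq> 0" and mu: "mu \<noteq> 0" and lm: "la^2 \<noteq> mu^2"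
    and g: "\<And>a b. a \<in> {la, -la, mu, -mu} \<Longrightarrow> b \<in> {la, -la, mu, -mu} \<Longrightarrow>
        (b - a) * g a b = 1 - p1 a * q1 b - p2 a * q2 b"
  shows "8 * (la * mu * (la^2 + mu^2) / (la^2 - mu^2)^2)
      + 2 * mu * flow_derivative g la mu mu + 2 * mu * flow_derivative g la (-mu) (-mu)
    = ((la+mu)/(la-mu))^2 * double_shift_ratio g la (-mu) * double_shift_ratio g (-la) mu
      - (1/((la+mu)/(la-mu))^2) * double_shift_ratio g la mu * double_shift_ratio g (-la) (-mu)"
proof -
  define X where "X = (\<lambda>a b. p1 a * q1 b + p2 a * q2 b)"
  have X: "(b - a) * g a b = 1 - X a b" if "a \<in> {la, -la, mu, -mu}" "b \<in> {la, -la, mu, -mu}" for a b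
    using g[OF that] unfolding X_def by simp
  have "la \<noteq> mu" "la \<noteq> - mu"
    using lm by auto
  then have lm': "la - mu \<noteq> 0" "la + mu \<noteq> 0" "mu - la \<noteq> 0" "- mu - la \<noteq> 0"
    by (auto simp: algebra_simps)
  let ?D = "flow_derivative g"
  have D: "?D la mu mu
      = 2*la*((X la mu * X mu la - 1)/(la-mu)^2 + (X (-la) mu * X mu (-la) - 1)/(-la-mu)^2)"
    "?D la (-mu) (-mu)
      = 2*la*((X la (-mu) * X (-mu) la - 1)/(la- -mu)^2 + (X (-la) (-mu) * X (-mu) (-la) - 1)/(-la- -mu)^2)"
    by (intro flow_derivative_rank_two; use lm' X in auto)+
  have "p1 a * q1 a + p2 a * q2 a = 1" if "a \<in> {la, -la, mu, -mu}" for a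
    using X[OF that that] unfolding X_def by simp
  from toda_polynomial_identity[OF this]
  have "-8*la*mu*(la^2+mu^2) + 4*la*mu*((la+mu)^2*(X la mu * X mu la + X (-la) (-mu) * X (-mu) (-la))
        + (la-mu)^2*(X (-la) mu * X mu (-la) + X la (-mu) * X (-mu) la))
     = ((la-mu)^2*X la (-la)*X (-mu) mu + 4*la*mu*X la mu*X (-mu) (-la))
         * ((mu-la)^2*X (-la) la*X mu (-mu) + 4*la*mu*X (-la) (-mu)*X mu la)
       - ((la+mu)^2*X la (-la)*X mu (-mu) - 4*la*mu*X la (-mu)*X mu (-la))
         * ((la+mu)^2*X (-la) la*X (-mu) mu - 4*la*mu*X (-la) mu*X (-mu) la)"
    unfolding X_def .
  then show ?thesis
    by (simp only: D double_shift_ratios_rank_two[OF la mu lm'(1,2) X]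
        toda_lhs_common_denominator[OF lm'(1,2)] toda_rhs_common_denominator[OF lm'(1,2)])
qed

section \<open>The Toda lattice\<close>

lemma phi_second_differences:
  "phi la mu x y (n1 + 1) n2 - 2 * phi la mu x y n1 n2 + phi la mu x y (n1 - 1) n2
    = 2 * ln \<bar>(la + mu) / (la - mu)\<bar>"
  "phi la mu x y n1 (n2 + 1) - 2 * phi la mu x y n1 n2 + phi la mu x y n1 (n2 - 1)
    = - 2 * ln \<bar>(la + mu) / (la - mu)\<bar>"
  unfolding phi_def by (simp_all add: power2_eq_square algebra_simps)

lemma Hd_uminus: "Hd M (-z) k = inverse (Hd M z k)"
  and Hbd_uminus: "Hbd Mb (-z) k = inverse (Hbd Mb z k)"
  unfolding Hd_def Hbd_def by (simp_all add: algebra_simps)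

context cauchy_matrices
begin

lemma shiftE_Hd: "shiftE z E = (\<lambda>k. E k * Hd M z k)"
  and shiftEb_Hbd: "shiftEb z Eb = (\<lambda>k. Eb k * Hbd Mb z k)"
  unfolding shiftE_def shiftEb_def Hd_def Hbd_def by simp_all

lemma regular_uminus: "regular (-z) \<longleftrightarrow> regular z"
  unfolding regular_def by auto

lemma Hd_nonzero: "regular z \<Longrightarrow> Hd M z k \<noteq> 0"
  and Hbd_nonzero: "regular z \<Longrightarrow> Hbd Mb z k \<noteq> 0"
  unfolding regular_def Hd_def Hbd_def by auto

end

locale toda_lattice = cauchy_matrices M Mb c cb for M Mb c cb :: "real^'n::finite" +
  fixes la mu :: real
  assumes la_nonzero: "la \<noteq> 0" and mu_nonzero: "mu \<noteq> 0" and la_mu: "la^2 \<noteq> mu^2"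
    and la_off_nodes: "\<And>j. la \<noteq> M$j \<and> la \<noteq> - M$j \<and> la \<noteq> Mb$j \<and> la \<noteq> - Mb$j"
    and mu_off_nodes: "\<And>j. mu \<noteq> M$j \<and> mu \<noteq> - M$j \<and> mu \<noteq> Mb$j \<and> mu \<noteq> - Mb$j"
    and det_pos: "\<And>x y n1 n2. det (mat 1 + Amat la mu c M Mb x y n1 n2 ** Abmat la mu cb M Mb x y n1 n2) > 0"
begin

text \<open>The diagonal weights of A(x,y,n1,n2) and bar A(x,y,n1,n2), indexed by m = n1 + n2 and
  l = n2 - n1.\<close>

definition weightE :: "real \<Rightarrow> real \<Rightarrow> int \<Rightarrow> int \<Rightarrow> 'n \<Rightarrow> real" where
  "weightE x y m l k = exp (x * Ld M la k + y * Ld M mu k) * Hd M la k powi m * Hd M mu k powi l"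

definition weightEb :: "real \<Rightarrow> real \<Rightarrow> int \<Rightarrow> int \<Rightarrow> 'n \<Rightarrow> real" where
  "weightEb x y m l k = exp (x * Lbd Mb la k + y * Lbd Mb mu k) * Hbd Mb la k powi m * Hbd Mb mu k powi l"

definition tau :: "real \<Rightarrow> real \<Rightarrow> int \<Rightarrow> int \<Rightarrow> real" where
  "tau x y n1 n2 = det (CG (weightE x y (n1 + n2) (n2 - n1)) (weightEb x y (n1 + n2) (n2 - n1)))"

definition g :: "real \<Rightarrow> real \<Rightarrow> int \<Rightarrow> int \<Rightarrow> real \<Rightarrow> real \<Rightarrow> real" where
  "g x y n1 n2 = gform (weightE x y (n1 + n2) (n2 - n1)) (weightEb x y (n1 + n2) (n2 - n1))"

lemma la_ne_mu: "la \<noteq> mu" "la \<noteq> - mu"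
  using la_mu by auto

lemma regular_la: "regular la" and regular_mu: "regular mu"
proof -
  have "regular z" if "\<And>j. z \<noteq> M$j \<and> z \<noteq> - M$j \<and> z \<noteq> Mb$j \<and> z \<noteq> - Mb$j" for z
    unfolding regular_def using that by (metis add_eq_0_iff eq_iff_diff_eq_0 minus_equation_iff)
  then show "regular la" "regular mu"
    using la_off_nodes mu_off_nodes by blast+
qed

lemma tau_eq_det: "tau x y n1 n2 = det (mat 1 + Amat la mu c M Mb x y n1 n2 ** Abmat la mu cb M Mb x y n1 n2)"
proof -
  have "Amat la mu c M Mb x y n1 n2 = CA (weightE x y (n1 + n2) (n2 - n1))"
    "Abmat la mu cb M Mb x y n1 n2 = CB (weightEb x y (n1 + n2) (n2 - n1))"
    unfolding Amat_def Abmat_def A0_def Ab0_def CA_def CB_def weightE_def weightEb_def mult_diagm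
    by (simp_all add: vec_eq_iff mult.assoc)
  then show ?thesis
    unfolding tau_def CG_def by simp
qed

lemma tau_pos: "tau x y n1 n2 > 0"
  unfolding tau_eq_det by (rule det_pos)

lemma invertible_CG_weight: "invertible (CG (weightE x y (n1 + n2) (n2 - n1)) (weightEb x y (n1 + n2) (n2 - n1)))"
  using tau_pos[of x y n1 n2] invertible_det_nz unfolding tau_def by force

lemma uu_eq: "uu la mu c cb M Mb x y n1 n2 = phi la mu x y n1 n2 + ln (tau x y n1 n2)"
  unfolding uu_def tau_eq_det ..

lemma
  shows weightE_shift: "weightE x y (m + 1) l = shiftE la (weightE x y m l)"
      "weightE x y (m - 1) l = shiftE (-la) (weightE x y m l)"
      "weightE x y m (l + 1) = shiftE mu (weightE x y m l)"
      "weightE x y m (l - 1) = shiftE (-mu) (weightE x y m l)"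
    and weightEb_shift: "weightEb x y (m + 1) l = shiftEb la (weightEb x y m l)"
      "weightEb x y (m - 1) l = shiftEb (-la) (weightEb x y m l)"
      "weightEb x y m (l + 1) = shiftEb mu (weightEb x y m l)"
      "weightEb x y m (l - 1) = shiftEb (-mu) (weightEb x y m l)"
  unfolding weightE_def weightEb_def shiftE_Hd shiftEb_Hbd Hd_uminus Hbd_uminus fun_eq_iff
  using Hd_nonzero[OF regular_la] Hd_nonzero[OF regular_mu] Hbd_nonzero[OF regular_la]
    Hbd_nonzero[OF regular_mu]
  by (simp_all add: power_int_add_1 power_int_diff divide_inverse mult_ac)

lemma tau_shift:
  "tau x y (n1 + 1) n2 = tau x y n1 n2 * double_shift_ratio (g x y n1 n2) la (-mu)"
  "tau x y (n1 - 1) n2 = tau x y n1 n2 * double_shift_ratio (g x y n1 n2) (-la) mu"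
  "tau x y n1 (n2 + 1) = tau x y n1 n2 * double_shift_ratio (g x y n1 n2) la mu"
  "tau x y n1 (n2 - 1) = tau x y n1 n2 * double_shift_ratio (g x y n1 n2) (-la) (-mu)"
proof -
  let ?E = "weightE x y (n1 + n2) (n2 - n1)" and ?Eb = "weightEb x y (n1 + n2) (n2 - n1)"
  have "det (CG (shiftE z2 (shiftE z1 ?E)) (shiftEb z2 (shiftEb z1 ?Eb)))
      = tau x y n1 n2 * double_shift_ratio (g x y n1 n2) z1 z2"
    if "z1 \<in> {la, -la}" "z2 \<in> {mu, -mu}" for z1 z2
  proof -
    have "regular z1" "regular z2" "z1 \<noteq> z2"
      using that regular_la regular_mu la_ne_mu by (auto simp: regular_uminus)
    then show ?thesis
      unfolding tau_def g_def regular_def by (intro det_CG_double_shift invertible_CG_weight) auto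
  qed
  moreover have
    "tau x y (n1 + 1) n2 = det (CG (shiftE (-mu) (shiftE la ?E)) (shiftEb (-mu) (shiftEb la ?Eb)))"
    "tau x y (n1 - 1) n2 = det (CG (shiftE mu (shiftE (-la) ?E)) (shiftEb mu (shiftEb (-la) ?Eb)))"
    "tau x y n1 (n2 + 1) = det (CG (shiftE mu (shiftE la ?E)) (shiftEb mu (shiftEb la ?Eb)))"
    "tau x y n1 (n2 - 1) = det (CG (shiftE (-mu) (shiftE (-la) ?E)) (shiftEb (-mu) (shiftEb (-la) ?Eb)))"
    unfolding tau_def weightE_shift[symmetric] weightEb_shift[symmetric] by (simp_all add: algebra_simps)
  ultimately show
    "tau x y (n1 + 1) n2 = tau x y n1 n2 * double_shift_ratio (g x y n1 n2) la (-mu)"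
    "tau x y (n1 - 1) n2 = tau x y n1 n2 * double_shift_ratio (g x y n1 n2) (-la) mu"
    "tau x y n1 (n2 + 1) = tau x y n1 n2 * double_shift_ratio (g x y n1 n2) la mu"
    "tau x y n1 (n2 - 1) = tau x y n1 n2 * double_shift_ratio (g x y n1 n2) (-la) (-mu)"
    by simp_all
qed

abbreviation u :: "real \<Rightarrow> real \<Rightarrow> int \<Rightarrow> int \<Rightarrow> real" where
  "u \<equiv> uu la mu c cb M Mb"

lemma exp_second_differences:
  "exp (u x y (n1 + 1) n2 - 2 * u x y n1 n2 + u x y (n1 - 1) n2)
    = ((la + mu) / (la - mu))^2 * double_shift_ratio (g x y n1 n2) la (-mu)
        * double_shift_ratio (g x y n1 n2) (-la) mu"
  "exp (u x y n1 (n2 + 1) - 2 * u x y n1 n2 + u x y n1 (n2 - 1))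
    = 1 / ((la + mu) / (la - mu))^2 * double_shift_ratio (g x y n1 n2) la mu
        * double_shift_ratio (g x y n1 n2) (-la) (-mu)"
proof -
  let ?T = "double_shift_ratio (g x y n1 n2)" and ?L = "ln \<bar>(la + mu) / (la - mu)\<bar>"
  have "exp ?L = \<bar>(la + mu) / (la - mu)\<bar>"
    using la_ne_mu by (intro exp_ln) auto
  then have exp_L: "exp (2 * ?L) = ((la + mu) / (la - mu))^2"
    unfolding mult_2 exp_add by (simp add: power2_eq_square)
  have pos: "?T la (-mu) > 0" "?T (-la) mu > 0" "?T la mu > 0" "?T (-la) (-mu) > 0"
    using tau_pos[of x y n1 n2] tau_pos[of x y "n1 + 1" n2] tau_pos[of x y "n1 - 1" n2]
      tau_pos[of x y n1 "n2 + 1"] tau_pos[of x y n1 "n2 - 1"]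
    unfolding tau_shift by (simp_all add: zero_less_mult_iff)
  have "u x y (n1 + 1) n2 - 2 * u x y n1 n2 + u x y (n1 - 1) n2 = 2 * ?L + ln (?T la (-mu)) + ln (?T (-la) mu)"
    "u x y n1 (n2 + 1) - 2 * u x y n1 n2 + u x y n1 (n2 - 1) = - (2 * ?L) + ln (?T la mu) + ln (?T (-la) (-mu))"
    using phi_second_differences[of la mu x y n1 n2] tau_pos[of x y n1 n2] pos
    unfolding uu_eq tau_shift by (simp_all add: ln_mult)
  then show
    "exp (u x y (n1 + 1) n2 - 2 * u x y n1 n2 + u x y (n1 - 1) n2) = ((la + mu) / (la - mu))^2 * ?T la (-mu) * ?T (-la) mu"
    "exp (u x y n1 (n2 + 1) - 2 * u x y n1 n2 + u x y n1 (n2 - 1)) = 1 / ((la + mu) / (la - mu))^2 * ?T la mu * ?T (-la) (-mu)"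
    by (simp_all only: exp_add exp_minus exp_L exp_ln pos inverse_eq_divide)
qed

lemma weight_flow:
  "weightE x t m l = flowE mu (weightE x 0 m l) t" "weightEb x t m l = flowEb mu (weightEb x 0 m l) t"
  "weightE t y m l = flowE la (weightE 0 y m l) t" "weightEb t y m l = flowEb la (weightEb 0 y m l) t"
  unfolding weightE_def weightEb_def flowE_def flowEb_def by (simp_all add: fun_eq_iff exp_add mult_ac)

definition kappa :: real where
  "kappa = la * mu * (la^2 + mu^2) / (la^2 - mu^2)^2"

definition u_y :: "real \<Rightarrow> real \<Rightarrow> int \<Rightarrow> int \<Rightarrow> real" where
  "u_y x y n1 n2 = 8 * x * kappa + 2 * mu * (g x y n1 n2 mu mu + g x y n1 n2 (-mu) (-mu))"

lemma has_real_derivative_u_y: "((\<lambda>t. u x t n1 n2) has_real_derivative u_y x y n1 n2) (at y)"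
proof -
  let ?E0 = "weightE x 0 (n1 + n2) (n2 - n1)" and ?Eb0 = "weightEb x 0 (n1 + n2) (n2 - n1)"
  have flow: "tau x t n1 n2 = det (CG (flowE mu ?E0 t) (flowEb mu ?Eb0 t))"
    "g x t n1 n2 = gform (flowE mu ?E0 t) (flowEb mu ?Eb0 t)"
    "invertible (CG (flowE mu ?E0 t) (flowEb mu ?Eb0 t))" for t
    using invertible_CG_weight[of x t n1 n2] unfolding tau_def g_def weight_flow(1,2)[of x t] by simp_all
  from has_real_derivative_det_CG_flow[OF regular_mu flow(3)]
  have "((\<lambda>t. tau x t n1 n2) has_real_derivative
      tau x y n1 n2 * (2 * mu * g x y n1 n2 mu mu + 2 * mu * g x y n1 n2 (-mu) (-mu))) (at y)"
    unfolding flow(1,2) .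
  from DERIV_chain2[OF DERIV_ln_divide[OF tau_pos[of x y n1 n2]] this]
  have "((\<lambda>t. ln (tau x t n1 n2)) has_real_derivative
      2 * mu * g x y n1 n2 mu mu + 2 * mu * g x y n1 n2 (-mu) (-mu)) (at y)"
    using tau_pos[of x y n1 n2] by simp
  moreover have "((\<lambda>t. phi la mu x t n1 n2) has_real_derivative 8 * x * kappa) (at y)"
    unfolding phi_def kappa_def[symmetric] by (auto intro!: derivative_eq_intros)
  ultimately show ?thesis
    using DERIV_add unfolding uu_eq u_y_def by (fastforce simp: algebra_simps)
qed

lemma has_real_derivative_u_y_x:
  "((\<lambda>t. u_y t y n1 n2) has_real_derivative
    8 * kappa + 2 * mu * flow_derivative (g x y n1 n2) la mu mu
      + 2 * mu * flow_derivative (g x y n1 n2) la (-mu) (-mu)) (at x)"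
proof -
  let ?E0 = "weightE 0 y (n1 + n2) (n2 - n1)" and ?Eb0 = "weightEb 0 y (n1 + n2) (n2 - n1)"
  have flow: "g t y n1 n2 = gform (flowE la ?E0 t) (flowEb la ?Eb0 t)"
    "invertible (CG (flowE la ?E0 t) (flowEb la ?Eb0 t))" for t
    using invertible_CG_weight[of t y n1 n2] unfolding g_def weight_flow(3,4)[of t y] by simp_all
  have "((\<lambda>t. g t y n1 n2 b b) has_real_derivative flow_derivative (g x y n1 n2) la b b) (at x)"
    if "b \<in> {mu, -mu}" for b
  proof -
    have "regular b"
      using that regular_mu by (auto simp: regular_uminus)
    then show ?thesis
      using that la_ne_mu unfolding flow(1) regular_def
      by (intro has_real_derivative_gform_flow regular_la flow(2)) auto
  qed
  then show ?thesis
    unfolding u_y_def by (auto intro!: derivative_eq_intros simp: algebra_simps)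
qed

lemma g_rank_two:
  fixes x y :: real and n1 n2 :: int
  assumes "a \<in> {la, -la, mu, -mu}" "b \<in> {la, -la, mu, -mu}"
  defines "E \<equiv> weightE x y (n1 + n2) (n2 - n1)" and "Eb \<equiv> weightEb x y (n1 + n2) (n2 - n1)"
  shows "(b - a) * g x y n1 n2 a b = 1 - p1 E Eb a * q1 E Eb b - p2 E Eb a * q2 E Eb b"
proof -
  have "regular a" "regular b"
    using assms(1,2) regular_la regular_mu by (auto simp: regular_uminus)
  then show ?thesis
    unfolding g_def E_def Eb_def regular_def by (intro gform_rank_two invertible_CG_weight) auto
qed

lemma toda_equation:
  "8 * kappa + 2 * mu * flow_derivative (g x y n1 n2) la mu mu
      + 2 * mu * flow_derivative (g x y n1 n2) la (-mu) (-mu)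
    = exp (u x y (n1 + 1) n2 - 2 * u x y n1 n2 + u x y (n1 - 1) n2)
      - exp (u x y n1 (n2 + 1) - 2 * u x y n1 n2 + u x y n1 (n2 - 1))"
  unfolding exp_second_differences kappa_def
  by (rule toda_identity[OF la_nonzero mu_nonzero la_mu g_rank_two])

lemma toda_lattice_solution:
  "\<exists>uy. (\<forall>x' y'. ((\<lambda>t. u x' t n1 n2) has_real_derivative uy x' y') (at y')) \<and>
    ((\<lambda>t. uy t y) has_real_derivative
      exp (u x y (n1 + 1) n2 - 2 * u x y n1 n2 + u x y (n1 - 1) n2)
      - exp (u x y n1 (n2 + 1) - 2 * u x y n1 n2 + u x y n1 (n2 - 1))) (at x)"
  unfolding toda_equation[symmetric]
  by (intro exI[of _ "\<lambda>x' y'. u_y x' y' n1 n2"] conjI allI has_real_derivative_u_y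
      has_real_derivative_u_y_x)

end

theorem theorem1:
  fixes la mu :: real and M Mb c cb :: "real^'n::finite"
  assumes "la \<noteq> 0" and "mu \<noteq> 0" and "la^2 \<noteq> mu^2"
    and "\<forall>j k. Mb$j \<noteq> M$k"
    and "\<forall>j. la \<noteq> M$j \<and> la \<noteq> - M$j \<and> la \<noteq> Mb$j \<and> la \<noteq> - Mb$j"
    and "\<forall>j. mu \<noteq> M$j \<and> mu \<noteq> - M$j \<and> mu \<noteq> Mb$j \<and> mu \<noteq> - Mb$j"
    and "\<forall>x y n1 n2. det (mat 1 + Amat la mu c M Mb x y n1 n2 ** Abmat la mu cb M Mb x y n1 n2) > 0"
  defines "u \<equiv> uu la mu c cb M Mb"
  shows "\<forall>(x::real) (y::real) (n1::int) (n2::int).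
     \<exists>uy :: real \<Rightarrow> real \<Rightarrow> real.
       (\<forall>x' y'. ((\<lambda>t. u x' t n1 n2) has_real_derivative uy x' y') (at y')) \<and>
       ((\<lambda>t. uy t y) has_real_derivative
          (exp (u x y (n1 + 1) n2 - 2 * u x y n1 n2 + u x y (n1 - 1) n2)
           - exp (u x y n1 (n2 + 1) - 2 * u x y n1 n2 + u x y n1 (n2 - 1)))) (at x)"
proof -
  interpret toda_lattice M Mb c cb la mu
    using assms(1-7) by unfold_locales auto
  show ?thesis
    unfolding u_def using toda_lattice_solution by blast
qed

end
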